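(* Let $I$ be a finite set and $T$ a tree on $I$. The lattice $[\hat{0},T]$ (an interval of $\operatorname{For}(I)$) is EL-shellable.
   Context: A tree on a finite set $I$ is a (non-planar) rooted binary tree whose leaves are bijectively labeled by $I$: vertices are inner vertices (valence $3$) and leaves and the root (valence $1$), edges oriented towards the root; one-leaf trees are allowed. A forest on $I$ is a set of trees whose leaf sets partition $I$. For forests $F,G$ on $I$, $F \leq G$ if there is a continuous map $F\to G$ which (D1) is increasing with respect to orientation towards the root, (D2) maps inner vertices to inner vertices injectively, (D3) is the identity of $I$ on leaves, (D4) is injective on each tree of $F$. This gives the poset $\operatorname{For}(I)$, graded by the number of inner vertices, with minimum $\hat{0}$ (no inner vertices). An edge-labeling of a poset $P$ is a map $\lambda$ from the set of covering pairs $x\lhd y$ to $\mathbb{N}$; a saturated chain $x_0\lhd\dots\lhd x_k$ has label $(\lambda(x_0,x_1),\dots,\lambda(x_{k-1},x_k))$ and is increasing if this sequence is weakly increasing. An EL-labeling is an edge-labeling such that every interval $[x,y]$ has exactly one increasing saturated chain from $x$ to $y$, and its label is strictly lexicographically smaller than the label of every other saturated chain from $x$ to $y$. A graded poset is EL-shellable if it admits an EL-labeling. *)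

theory Defs
  imports Main
begin

text \<open>A rooted binary (non-planar) forest whose leaves are labelled bijectively by I is
encoded by the set of leaf sets ("clusters") of its non-root vertices: leaf i gives {i},
an inner vertex gives the set of leaves below it. The root of each tree is a valence-1
vertex whose leaf set equals that of its unique child, so it carries no further
information.\<close>

definition children :: "'a set set \<Rightarrow> 'a set \<Rightarrow> 'a set \<Rightarrow> 'a set \<Rightarrow> bool" where
  "children F C A B \<longleftrightarrow> A \<in> F \<and> B \<in> F \<and> A \<noteq> {} \<and> B \<noteq> {} \<and> A \<inter> B = {} \<and> A \<union> B = C"

definition inner :: "'a set set \<Rightarrow> 'a set set" where
  "inner F = {C \<in> F. \<not> (\<exists>i. C = {i})}"

definition is_forest :: "'a set \<Rightarrow> 'a set set \<Rightarrow> bool" where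
  "is_forest I F \<longleftrightarrow>
     (\<forall>C\<in>F. C \<noteq> {} \<and> C \<subseteq> I) \<and>
     (\<forall>i\<in>I. {i} \<in> F) \<and>
     (\<forall>A\<in>F. \<forall>B\<in>F. A \<subseteq> B \<or> B \<subseteq> A \<or> A \<inter> B = {}) \<and>
     (\<forall>C\<in>inner F. \<exists>A B. children F C A B)"

definition is_tree :: "'a set \<Rightarrow> 'a set set \<Rightarrow> bool" where
  "is_tree I T \<longleftrightarrow> is_forest I T \<and> I \<in> T"

definition zero_forest :: "'a set \<Rightarrow> 'a set set" where
  "zero_forest I = {{i} | i. i \<in> I}"

text \<open>A map F \<rightarrow> G as in (D1)-(D4) is encoded by its values phi on
the non-root vertices (clusters) of F, taking values in vertices (clusters) of G:
(D3) phi is the identity on leaves; (D2) phi maps inner vertices to inner vertices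
injectively; (D1) continuity plus monotonicity: the edge from a child A of C is sent to
the upward path from phi A to phi C in G (so phi A \<subseteq> phi C); (D4) injectivity on
each tree: the two upward paths from phi A and phi B (A, B the children of C) meet only
at phi C, i.e. phi C is the smallest cluster of G containing phi A \<union> phi B. Roots of F
can always be sent to the root of the corresponding tree of G.\<close>
definition forest_le :: "'a set \<Rightarrow> 'a set set \<Rightarrow> 'a set set \<Rightarrow> bool" where
  "forest_le I F G \<longleftrightarrow> is_forest I F \<and> is_forest I G \<and>
     (\<exists>\<phi>. (\<forall>i\<in>I. \<phi> {i} = {i}) \<and>
          (\<forall>C\<in>inner F. \<phi> C \<in> inner G) \<and>
          inj_on \<phi> (inner F) \<and>
          (\<forall>C\<in>inner F. \<forall>A B. children F C A B \<longrightarrow>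
              \<phi> A \<subseteq> \<phi> C \<and> \<phi> B \<subseteq> \<phi> C \<and>
              (\<forall>D\<in>G. \<phi> A \<union> \<phi> B \<subseteq> D \<longrightarrow> \<phi> C \<subseteq> D)))"

definition covers :: "'x set \<Rightarrow> ('x \<Rightarrow> 'x \<Rightarrow> bool) \<Rightarrow> 'x \<Rightarrow> 'x \<Rightarrow> bool" where
  "covers P le x y \<longleftrightarrow> x \<in> P \<and> y \<in> P \<and> le x y \<and> x \<noteq> y \<and>
     \<not> (\<exists>z\<in>P. le x z \<and> le z y \<and> z \<noteq> x \<and> z \<noteq> y)"

definition sat_chain :: "'x set \<Rightarrow> ('x \<Rightarrow> 'x \<Rightarrow> bool) \<Rightarrow> 'x \<Rightarrow> 'x \<Rightarrow> 'x list \<Rightarrow> bool" where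
  "sat_chain P le x y cs \<longleftrightarrow> cs \<noteq> [] \<and> hd cs = x \<and> last cs = y \<and> set cs \<subseteq> P \<and>
     (\<forall>i. Suc i < length cs \<longrightarrow> covers P le (cs ! i) (cs ! Suc i))"

definition chain_label :: "('x \<Rightarrow> 'x \<Rightarrow> nat) \<Rightarrow> 'x list \<Rightarrow> nat list" where
  "chain_label lab cs = map (\<lambda>i. lab (cs ! i) (cs ! Suc i)) [0..<length cs - 1]"

definition EL_labeling :: "'x set \<Rightarrow> ('x \<Rightarrow> 'x \<Rightarrow> bool) \<Rightarrow> ('x \<Rightarrow> 'x \<Rightarrow> nat) \<Rightarrow> bool" where
  "EL_labeling P le lab \<longleftrightarrow>
     (\<forall>x\<in>P. \<forall>y\<in>P. le x y \<longrightarrow>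
        (\<exists>!cs. sat_chain P le x y cs \<and> sorted (chain_label lab cs)) \<and>
        (\<forall>cs cs'. sat_chain P le x y cs \<and> sorted (chain_label lab cs) \<and>
                  sat_chain P le x y cs' \<and> cs' \<noteq> cs \<longrightarrow>
                  (chain_label lab cs, chain_label lab cs') \<in> lexord {(a, b). a < b}))"

definition graded :: "'x set \<Rightarrow> ('x \<Rightarrow> 'x \<Rightarrow> bool) \<Rightarrow> bool" where
  "graded P le \<longleftrightarrow> finite P \<and> (\<exists>\<rho>::'x \<Rightarrow> nat. \<forall>x\<in>P. \<forall>y\<in>P. covers P le x y \<longrightarrow> \<rho> y = \<rho> x + 1)"

definition EL_shellable :: "'x set \<Rightarrow> ('x \<Rightarrow> 'x \<Rightarrow> bool) \<Rightarrow> bool" where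
  "EL_shellable P le \<longleftrightarrow> graded P le \<and> (\<exists>lab. EL_labeling P le lab)"

definition forest_interval :: "'a set \<Rightarrow> 'a set set \<Rightarrow> 'a set set \<Rightarrow> 'a set set set" where
  "forest_interval I F G = {H. is_forest I H \<and> forest_le I F H \<and> forest_le I H G}"

end

theory Submission
  imports Defs
begin

text \<open>A forest H lies below the tree T exactly when sending each inner vertex of H to the
lowest common ancestor in T of its leaves is injective. Such a forest is determined by its
partition of I into trees, and the partitions that occur are the equivalence relations E in
which any two related pairs with the same ancestor in T lie in one class; the order becomes
inclusion. Let S(E) be the set of vertices of T that are ancestors of related pairs: S grows
along the order, separates comparable elements, and a cover adds exactly one vertex. Fix a
linear extension of the tree order on T and label a cover by the vertex it adds. Going up
from E to E', the least vertex v = lca {a, b} of S(E') - S(E) is added by exactly one cover,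
the one merging the classes of a and b, because pairs of E' strictly below v already lie in
E. Hence the increasing chains add the new vertices in increasing order, which makes them
unique and lexicographically first.\<close>

section \<open>Laminar families and least enclosing members\<close>

definition laminar :: "'a set set \<Rightarrow> bool" where
  "laminar G \<longleftrightarrow> (\<forall>A\<in>G. \<forall>B\<in>G. A \<subseteq> B \<or> B \<subseteq> A \<or> A \<inter> B = {})"

definition lca :: "'a set set \<Rightarrow> 'a set \<Rightarrow> 'a set" where
  "lca G X = (THE D. D \<in> G \<and> X \<subseteq> D \<and> (\<forall>D'\<in>G. X \<subseteq> D' \<longrightarrow> D \<subseteq> D'))"

lemma lca_eqI:
  assumes "D \<in> G" "X \<subseteq> D" "\<And>D'. D' \<in> G \<Longrightarrow> X \<subseteq> D' \<Longrightarrow> D \<subseteq> D'"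
  shows "lca G X = D"
  unfolding lca_def using assms by (intro the_equality) (auto intro: subset_antisym)

lemma laminar_nested:
  "laminar G \<Longrightarrow> A \<in> G \<Longrightarrow> B \<in> G \<Longrightarrow> x \<in> A \<Longrightarrow> x \<in> B \<Longrightarrow> A \<subseteq> B \<or> B \<subseteq> A"
  unfolding laminar_def by blast

lemma lca_spec:
  assumes "finite G" "laminar G" "X \<noteq> {}" "D \<in> G" "X \<subseteq> D"
  shows "lca G X \<in> G" "X \<subseteq> lca G X" "\<And>D'. D' \<in> G \<Longrightarrow> X \<subseteq> D' \<Longrightarrow> lca G X \<subseteq> D'"
proof -
  let ?above = "{D \<in> G. X \<subseteq> D}"
  have "finite ?above" "?above \<noteq> {}" using assms by auto
  then obtain m where m: "m \<in> G" "X \<subseteq> m" and minimal: "\<And>D. D \<in> ?above \<Longrightarrow> D \<subseteq> m \<Longrightarrow> m = D"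
    using finite_has_minimal by (metis (no_types, lifting) mem_Collect_eq)
  obtain x where "x \<in> X" using assms(3) by blast
  \<comment> \<open>the members of a laminar family containing x form a chain\<close>
  then have least: "m \<subseteq> D'" if "D' \<in> G" "X \<subseteq> D'" for D'
    using laminar_nested[OF assms(2) that(1) m(1), of x] minimal[of D'] that m(2) \<open>x \<in> X\<close> by blast
  have "lca G X = m"
    using m least by (rule lca_eqI)
  with m least show "lca G X \<in> G" "X \<subseteq> lca G X" "\<And>D'. D' \<in> G \<Longrightarrow> X \<subseteq> D' \<Longrightarrow> lca G X \<subseteq> D'"
    by simp_all
qed

section \<open>Forests and their order\<close>

lemma forest_cluster_nonempty: "is_forest I F \<Longrightarrow> C \<in> F \<Longrightarrow> C \<noteq> {}"
  by (simp add: is_forest_def)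

lemma forest_cluster_subset: "is_forest I F \<Longrightarrow> C \<in> F \<Longrightarrow> C \<subseteq> I"
  by (simp add: is_forest_def)

lemma forest_singleton: "is_forest I F \<Longrightarrow> i \<in> I \<Longrightarrow> {i} \<in> F"
  by (simp add: is_forest_def)

lemma forest_inner_children: "is_forest I F \<Longrightarrow> C \<in> inner F \<Longrightarrow> \<exists>A B. children F C A B"
  by (simp add: is_forest_def)

lemma forest_laminar: "is_forest I F \<Longrightarrow> laminar F"
  unfolding is_forest_def laminar_def by blast

lemma finite_forest: "finite I \<Longrightarrow> is_forest I F \<Longrightarrow> finite F"
  unfolding is_forest_def by (meson Pow_iff finite_Pow_iff rev_finite_subset subsetI)

lemma finite_forest_cluster: "finite I \<Longrightarrow> is_forest I F \<Longrightarrow> C \<in> F \<Longrightarrow> finite C"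
  by (meson forest_cluster_subset rev_finite_subset)

lemma inner_in_forest: "C \<in> inner F \<Longrightarrow> C \<in> F"
  by (simp add: inner_def)

lemma inner_if_two_points: "C \<in> F \<Longrightarrow> a \<in> C \<Longrightarrow> b \<in> C \<Longrightarrow> a \<noteq> b \<Longrightarrow> C \<in> inner F"
  unfolding inner_def by auto

lemma children_sym: "children F C A B \<Longrightarrow> children F C B A"
  unfolding children_def by blast

lemma childrenD:
  assumes "children F C A B"
  shows "A \<in> F" "B \<in> F" "A \<noteq> {}" "B \<noteq> {}" "A \<inter> B = {}" "A \<union> B = C" "A \<subset> C" "B \<subset> C"
  using assms unfolding children_def by auto

lemma is_forest_zero_forest: "is_forest I (zero_forest I)"
  unfolding is_forest_def zero_forest_def inner_def by auto

lemma inner_zero_forest: "inner (zero_forest I) = {}"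
  unfolding zero_forest_def inner_def by auto

definition forest_map :: "'a set \<Rightarrow> 'a set set \<Rightarrow> 'a set set \<Rightarrow> ('a set \<Rightarrow> 'a set) \<Rightarrow> bool" where
  "forest_map I F G \<phi> \<longleftrightarrow> (\<forall>i\<in>I. \<phi> {i} = {i}) \<and> (\<forall>C\<in>inner F. \<phi> C \<in> inner G) \<and>
     inj_on \<phi> (inner F) \<and>
     (\<forall>C\<in>inner F. \<forall>A B. children F C A B \<longrightarrow>
        \<phi> A \<subseteq> \<phi> C \<and> \<phi> B \<subseteq> \<phi> C \<and> (\<forall>D\<in>G. \<phi> A \<union> \<phi> B \<subseteq> D \<longrightarrow> \<phi> C \<subseteq> D))"

lemma forest_le_iff_forest_map:
  "forest_le I F G \<longleftrightarrow> is_forest I F \<and> is_forest I G \<and> (\<exists>\<phi>. forest_map I F G \<phi>)"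
  unfolding forest_le_def forest_map_def by (rule refl)

lemma forest_map_is_lca:
  assumes "finite I" "is_forest I F" "is_forest I G" and \<phi>: "forest_map I F G \<phi>" and "C \<in> F"
  shows "\<phi> C \<in> G \<and> C \<subseteq> \<phi> C \<and> lca G C = \<phi> C"
  using \<open>C \<in> F\<close>
proof (induction "card C" arbitrary: C rule: less_induct)
  case less
  have lca_G: "lca G X \<subseteq> D" if "X \<noteq> {}" "D \<in> G" "X \<subseteq> D" for X D
    using lca_spec(3)[OF finite_forest forest_laminar that(1,2,3)] assms(1,3) that by blast
  show ?case
  proof (cases "C \<in> inner F")
    case False
    then obtain i where i: "C = {i}" "i \<in> I"
      using less.prems forest_cluster_subset[OF assms(2)] by (auto simp: inner_def)
    then have "{i} \<in> G" using forest_singleton[OF assms(3)] by blast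
    then have "lca G {i} = {i}" by (intro lca_eqI) auto
    then show ?thesis using i \<phi> \<open>{i} \<in> G\<close> by (auto simp: forest_map_def)
  next
    case True
    then obtain A B where ch: "children F C A B" using forest_inner_children[OF assms(2)] by blast
    note AB = childrenD[OF ch]
    have "card A < card C" "card B < card C"
      using AB(7,8) finite_forest_cluster[OF assms(1,2) less.prems] by (simp_all add: psubset_card_mono)
    then have IH: "\<phi> A \<in> G \<and> A \<subseteq> \<phi> A \<and> lca G A = \<phi> A" "\<phi> B \<in> G \<and> B \<subseteq> \<phi> B \<and> lca G B = \<phi> B"
      using less.hyps AB(1,2) by blast+
    have \<phi>C: "\<phi> C \<in> G" "\<phi> A \<subseteq> \<phi> C" "\<phi> B \<subseteq> \<phi> C" "\<And>D. D \<in> G \<Longrightarrow> \<phi> A \<union> \<phi> B \<subseteq> D \<Longrightarrow> \<phi> C \<subseteq> D"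
      using \<phi> True ch unfolding forest_map_def by (blast dest: inner_in_forest)+
    have sub: "C \<subseteq> \<phi> C" using \<phi>C(2,3) IH AB(6) by blast
    have least: "\<phi> C \<subseteq> D" if "D \<in> G" "C \<subseteq> D" for D
    proof -
      have "A \<subseteq> D" "B \<subseteq> D" using AB(6) that(2) by auto
      then have "\<phi> A \<union> \<phi> B \<subseteq> D"
        using lca_G[OF AB(3) that(1)] lca_G[OF AB(4) that(1)] IH by simp
      then show ?thesis using \<phi>C(4) that(1) by blast
    qed
    show ?thesis using lca_eqI[OF \<phi>C(1) sub least] \<phi>C(1) sub by simp
  qed
qed

lemma lca_forest_map:
  assumes "finite I" and F: "is_forest I F" and G: "is_forest I G"
    and above: "\<forall>C\<in>F. \<exists>D\<in>G. C \<subseteq> D" and inj: "inj_on (lca G) (inner F)"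
  shows "forest_map I F G (lca G)"
proof -
  have L: "lca G C \<in> G" "C \<subseteq> lca G C" "\<And>D. D \<in> G \<Longrightarrow> C \<subseteq> D \<Longrightarrow> lca G C \<subseteq> D" if C: "C \<in> F" for C
  proof -
    obtain D where "D \<in> G" "C \<subseteq> D" using above C by blast
    note spec = lca_spec[OF finite_forest[OF assms(1) G] forest_laminar[OF G] forest_cluster_nonempty[OF F C] this]
    show "lca G C \<in> G" by (rule spec(1))
    show "C \<subseteq> lca G C" by (rule spec(2))
    show "\<And>D. D \<in> G \<Longrightarrow> C \<subseteq> D \<Longrightarrow> lca G C \<subseteq> D" by (rule spec(3))
  qed
  have leaves: "\<forall>i\<in>I. lca G {i} = {i}"
    using forest_singleton[OF G] by (intro ballI lca_eqI) auto
  have inner: "\<forall>C\<in>inner F. lca G C \<in> inner G"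
  proof
    fix C assume C: "C \<in> inner F"
    then obtain A B where "children F C A B" using forest_inner_children[OF F] by blast
    then obtain a b where "a \<in> C" "b \<in> C" "a \<noteq> b" unfolding children_def by blast
    then show "lca G C \<in> inner G"
      using L[OF inner_in_forest[OF C]] by (auto intro: inner_if_two_points)
  qed
  have edges: "lca G A \<subseteq> lca G C \<and> lca G B \<subseteq> lca G C \<and>
      (\<forall>D\<in>G. lca G A \<union> lca G B \<subseteq> D \<longrightarrow> lca G C \<subseteq> D)" if C: "C \<in> inner F" and ch: "children F C A B" for C A B
  proof (intro conjI ballI impI)
    note LC = L[OF inner_in_forest[OF C]] and LA = L[OF childrenD(1)[OF ch]]
      and LB = L[OF childrenD(2)[OF ch]]
    show "lca G A \<subseteq> lca G C" "lca G B \<subseteq> lca G C"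
      using LA(3) LB(3) LC(1,2) childrenD(6)[OF ch] by auto
    show "lca G C \<subseteq> D" if "D \<in> G" "lca G A \<union> lca G B \<subseteq> D" for D
      using LC(3) LA(2) LB(2) childrenD(6)[OF ch] that by blast
  qed
  show ?thesis
    unfolding forest_map_def using leaves inner inj edges by blast
qed

text \<open>For forests, (D1)-(D4) force the map to send each cluster to the least cluster of the
target containing it.\<close>
lemma forest_le_iff_lca:
  assumes "finite I"
  shows "forest_le I F G \<longleftrightarrow> is_forest I F \<and> is_forest I G \<and>
           (\<forall>C\<in>F. \<exists>D\<in>G. C \<subseteq> D) \<and> inj_on (lca G) (inner F)"
proof
  assume "forest_le I F G"
  then obtain \<phi> where F: "is_forest I F" and G: "is_forest I G" and \<phi>: "forest_map I F G \<phi>"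
    unfolding forest_le_iff_forest_map by blast
  note is_lca = forest_map_is_lca[OF assms F G \<phi>]
  have "inj_on (lca G) (inner F)"
    using inj_on_cong[of "inner F" "lca G" \<phi>] \<phi> is_lca by (simp add: inner_def forest_map_def)
  then show "is_forest I F \<and> is_forest I G \<and> (\<forall>C\<in>F. \<exists>D\<in>G. C \<subseteq> D) \<and> inj_on (lca G) (inner F)"
    using F G is_lca by blast
next
  assume "is_forest I F \<and> is_forest I G \<and> (\<forall>C\<in>F. \<exists>D\<in>G. C \<subseteq> D) \<and> inj_on (lca G) (inner F)"
  then show "forest_le I F G"
    unfolding forest_le_iff_forest_map using lca_forest_map[OF assms] by blast
qed

section \<open>Lowest common ancestors in a tree\<close>

locale finite_tree =
  fixes I :: "'a set" and T :: "'a set set"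
  assumes finite_leaves: "finite I" and tree: "is_tree I T"
begin

lemma tree_forest: "is_forest I T"
  using tree unfolding is_tree_def by simp

lemma root_in_tree: "I \<in> T"
  using tree unfolding is_tree_def by simp

lemma finite_clusters: "finite T"
  using finite_forest[OF finite_leaves tree_forest] .

lemma finite_cluster: "D \<in> T \<Longrightarrow> finite D"
  using finite_forest_cluster[OF finite_leaves tree_forest] .

lemma tree_nested: "A \<in> T \<Longrightarrow> B \<in> T \<Longrightarrow> x \<in> A \<Longrightarrow> x \<in> B \<Longrightarrow> A \<subseteq> B \<or> B \<subseteq> A"
  using laminar_nested[OF forest_laminar[OF tree_forest]] .

lemma lca_tree:
  assumes "X \<noteq> {}" "X \<subseteq> I"
  shows "lca T X \<in> T" "X \<subseteq> lca T X" "\<And>D. D \<in> T \<Longrightarrow> X \<subseteq> D \<Longrightarrow> lca T X \<subseteq> D"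
  using lca_spec[OF finite_clusters forest_laminar[OF tree_forest] assms(1) root_in_tree assms(2)] by auto

lemma lca_pair:
  assumes "p \<in> I" "q \<in> I"
  shows "lca T {p,q} \<in> T" "p \<in> lca T {p,q}" "q \<in> lca T {p,q}"
    "\<And>D. D \<in> T \<Longrightarrow> p \<in> D \<Longrightarrow> q \<in> D \<Longrightarrow> lca T {p,q} \<subseteq> D"
  using lca_tree[of "{p,q}"] assms by auto

lemma lca_singleton: "i \<in> I \<Longrightarrow> lca T {i} = {i}"
  using forest_singleton[OF tree_forest] by (intro lca_eqI) auto

lemma lca_pair_inner:
  assumes "p \<in> I" "q \<in> I" "p \<noteq> q"
  shows "lca T {p,q} \<in> inner T"
  using lca_pair[OF assms(1,2)] assms(3) by (auto intro: inner_if_two_points)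

lemma lca_across_children:
  assumes "w \<in> T" and ch: "children T w L R" and "p \<in> L" "q \<in> R"
  shows "lca T {p,q} = w"
proof -
  note c = childrenD[OF ch]
  have "p \<in> I" "q \<in> I"
    using forest_cluster_subset[OF tree_forest] c(1,2) assms(3,4) by auto
  note pq = lca_pair[OF this]
  have "lca T {p,q} \<subseteq> w" using pq(4)[OF assms(1)] assms(3,4) c(6) by auto
  moreover have "L \<subseteq> lca T {p,q}"
    using tree_nested[OF c(1) pq(1) assms(3) pq(2)] pq(3) assms(4) c(5) by auto
  moreover have "R \<subseteq> lca T {p,q}"
    using tree_nested[OF c(2) pq(1) assms(4) pq(3)] pq(2) assms(3) c(5) by auto
  ultimately show ?thesis using c(6) by auto
qed

lemma lca_within_child:
  assumes ch: "children T w L R" and "p \<in> L" "q \<in> L"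
  shows "lca T {p,q} \<subset> w"
proof -
  note c = childrenD[OF ch]
  have "p \<in> I" "q \<in> I" using forest_cluster_subset[OF tree_forest c(1)] assms(2,3) by auto
  then have "lca T {p,q} \<subseteq> L" using lca_pair(4) c(1) assms(2,3) by simp
  then show ?thesis using c(7) by auto
qed

text \<open>Both pairs are split by the two children of their common ancestor w, so one of the
crosswise pairings stays strictly below w.\<close>
lemma lca_four_points:
  assumes "c \<in> I" "d \<in> I" "e \<in> I" "f \<in> I" "c \<noteq> d" "e \<noteq> f"
    and eq: "lca T {c,d} = lca T {e,f}"
  shows "(lca T {c,e} \<subset> lca T {c,d} \<and> lca T {d,f} \<subset> lca T {c,d}) \<or>
         (lca T {c,f} \<subset> lca T {c,d} \<and> lca T {d,e} \<subset> lca T {c,d})"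
proof -
  define w where "w = lca T {c,d}"
  have "w \<in> inner T" using lca_pair_inner assms(1,2,5) w_def by simp
  then obtain L R where ch: "children T w L R" using forest_inner_children[OF tree_forest] by blast
  have in_w: "c \<in> w" "d \<in> w" "e \<in> w" "f \<in> w"
    using lca_pair[OF assms(1,2)] lca_pair[OF assms(3,4)] eq w_def by auto
  have sides: "x \<in> L \<or> x \<in> R" if "x \<in> w" for x using childrenD(6)[OF ch] that by auto
  note below_L = lca_within_child[OF ch] and below_R = lca_within_child[OF children_sym[OF ch]]
  have "\<not> (c \<in> L \<and> d \<in> L)" "\<not> (c \<in> R \<and> d \<in> R)" "\<not> (e \<in> L \<and> f \<in> L)" "\<not> (e \<in> R \<and> f \<in> R)"
    using below_L[of c d] below_R[of c d] below_L[of e f] below_R[of e f] w_def eq by auto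
  then have "(lca T {c,e} \<subset> w \<and> lca T {d,f} \<subset> w) \<or> (lca T {c,f} \<subset> w \<and> lca T {d,e} \<subset> w)"
    using sides[OF in_w(1)] sides[OF in_w(2)] sides[OF in_w(3)] sides[OF in_w(4)] below_L below_R
    by (metis insert_commute)
  then show ?thesis using w_def by simp
qed

lemma lca_ultrametric:
  assumes "p \<in> I" "q \<in> I" "r \<in> I" and less: "lca T {p,q} \<subset> lca T {q,r}"
  shows "lca T {p,r} = lca T {q,r}"
proof -
  note pq = lca_pair[OF assms(1,2)] and qr = lca_pair[OF assms(2,3)] and pr = lca_pair[OF assms(1,3)]
  have "lca T {p,r} \<subseteq> lca T {q,r}" using pr(4)[OF qr(1)] pq(2) qr(3) less by auto
  moreover have "\<not> lca T {p,r} \<subseteq> lca T {p,q}"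
    using qr(4)[OF pq(1) pq(3)] pr(3) less by auto
  then have "lca T {p,q} \<subseteq> lca T {p,r}"
    using tree_nested[OF pr(1) pq(1) pr(2) pq(2)] by simp
  then have "lca T {q,r} \<subseteq> lca T {p,r}" using qr(4)[OF pr(1)] pq(3) pr(3) by auto
  ultimately show ?thesis by auto
qed

lemma lca_eq_lca_pair:
  assumes "X \<subseteq> I" "p \<in> X" "q \<in> X" "X \<subseteq> lca T {p,q}"
  shows "lca T X = lca T {p,q}"
proof -
  have "p \<in> I" "q \<in> I" using assms by auto
  note X = lca_tree[of X] and pq = lca_pair[OF this]
  show ?thesis
    using X(3)[OF _ _ pq(1) assms(4)] pq(4)[OF X(1)] X(2) assms(1,2,3) by blast
qed

lemma lca_split:
  assumes "X \<subseteq> I" "p \<in> X" "q \<in> X" "p \<noteq> q"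
  obtains L R where "children T (lca T X) L R" "X \<inter> L \<noteq> {}" "X \<inter> R \<noteq> {}"
proof -
  note X = lca_tree[of X]
  have "lca T X \<in> inner T"
    using X(1,2) assms by (auto intro: inner_if_two_points)
  then obtain L R where ch: "children T (lca T X) L R" using forest_inner_children[OF tree_forest] by blast
  have meets: "X \<inter> L' \<noteq> {}" if ch': "children T (lca T X) L' R'" for L' R'
  proof
    assume "X \<inter> L' = {}"
    then have "X \<subseteq> R'" using childrenD(6)[OF ch'] X(2) assms by auto
    then have "lca T X \<subseteq> R'" using X(3) childrenD(2)[OF ch'] assms by auto
    then show False using childrenD(3,5,6)[OF ch'] by auto
  qed
  show ?thesis using that[OF ch meets[OF ch] meets[OF children_sym[OF ch]]] .
qed

lemma lca_attained_by_pair: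
  assumes "X \<subseteq> I" "p \<in> X" "q \<in> X" "p \<noteq> q"
  obtains p' q' where "p' \<in> X" "q' \<in> X" "p' \<noteq> q'" "lca T {p',q'} = lca T X"
proof -
  obtain L R where ch: "children T (lca T X) L R" and "X \<inter> L \<noteq> {}" "X \<inter> R \<noteq> {}"
    using lca_split[OF assms] .
  then obtain p' q' where "p' \<in> X \<inter> L" "q' \<in> X \<inter> R" by blast
  moreover have "lca T X \<in> T" using lca_tree(1)[of X] assms by auto
  ultimately show ?thesis
    using that lca_across_children[OF _ ch] childrenD(5)[OF ch] by blast
qed

end

section \<open>Forests below a tree as compatible partitions\<close>

definition same_tree :: "'a set set \<Rightarrow> ('a \<times> 'a) set" where
  "same_tree H = {(a,b). \<exists>C\<in>H. a \<in> C \<and> b \<in> C}"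

lemma same_treeI: "C \<in> H \<Longrightarrow> a \<in> C \<Longrightarrow> b \<in> C \<Longrightarrow> (a,b) \<in> same_tree H"
  unfolding same_tree_def by blast

lemma same_treeE:
  assumes "(a,b) \<in> same_tree H"
  obtains C where "C \<in> H" "a \<in> C" "b \<in> C"
  using assms unfolding same_tree_def by blast

lemma same_tree_class:
  assumes "finite I" "is_forest I H" "a \<in> I"
  shows "same_tree H `` {a} \<in> H" "a \<in> same_tree H `` {a}"
    "\<And>C. C \<in> H \<Longrightarrow> a \<in> C \<Longrightarrow> C \<subseteq> same_tree H `` {a}"
proof -
  let ?S = "{C \<in> H. a \<in> C}"
  have "finite ?S" "?S \<noteq> {}"
    using finite_forest[OF assms(1,2)] forest_singleton[OF assms(2,3)] by auto
  then obtain m where m: "m \<in> H" "a \<in> m" and maximal: "\<And>C. C \<in> ?S \<Longrightarrow> m \<subseteq> C \<Longrightarrow> m = C"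
    using finite_has_maximal by (metis (no_types, lifting) mem_Collect_eq)
  have below_m: "C \<subseteq> m" if "C \<in> H" "a \<in> C" for C
    using laminar_nested[OF forest_laminar[OF assms(2)] that(1) m(1) that(2) m(2)] maximal[of C] that
    by blast
  have "same_tree H `` {a} = m"
  proof (intro equalityI subsetI)
    fix x assume "x \<in> same_tree H `` {a}"
    then obtain C where "C \<in> H" "a \<in> C" "x \<in> C" unfolding same_tree_def by blast
    then show "x \<in> m" using below_m by blast
  next
    fix x assume "x \<in> m"
    then show "x \<in> same_tree H `` {a}" unfolding same_tree_def using m by blast
  qed
  then show "same_tree H `` {a} \<in> H" "a \<in> same_tree H `` {a}"
    "\<And>C. C \<in> H \<Longrightarrow> a \<in> C \<Longrightarrow> C \<subseteq> same_tree H `` {a}"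
    using m below_m by auto
qed

lemma same_tree_equiv:
  assumes "is_forest I H"
  shows "equiv I (same_tree H)"
proof (rule equivI)
  show "same_tree H \<subseteq> I \<times> I"
    unfolding same_tree_def using forest_cluster_subset[OF assms] by auto
  show "refl_on I (same_tree H)"
    unfolding same_tree_def refl_on_def using forest_singleton[OF assms] by blast
  show "sym (same_tree H)"
    unfolding same_tree_def sym_def by auto
  show "trans (same_tree H)"
  proof (rule transI)
    fix a b c assume "(a,b) \<in> same_tree H" "(b,c) \<in> same_tree H"
    then obtain C1 C2 where "C1 \<in> H" "a \<in> C1" "b \<in> C1" "C2 \<in> H" "b \<in> C2" "c \<in> C2"
      unfolding same_tree_def by blast
    with laminar_nested[OF forest_laminar[OF assms] \<open>C1 \<in> H\<close> \<open>C2 \<in> H\<close>]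
    show "(a,c) \<in> same_tree H" unfolding same_tree_def by blast
  qed
qed

context finite_tree
begin

text \<open>The forests below T are encoded by their partitions of I into trees: these are the
equivalence relations E in which two pairs with the same lowest common ancestor in T
always lie in the same class, and each tree of the forest is recovered from its class by
cutting it with the clusters of T.\<close>

definition lca_compatible :: "('a \<times> 'a) set \<Rightarrow> bool" where
  "lca_compatible E \<longleftrightarrow> (\<forall>a b c d. (a,b) \<in> E \<longrightarrow> (c,d) \<in> E \<longrightarrow> a \<noteq> b \<longrightarrow> c \<noteq> d \<longrightarrow>
      lca T {a,b} = lca T {c,d} \<longrightarrow> (a,c) \<in> E)"

lemma lca_compatibleD:
  "lca_compatible E \<Longrightarrow> (a,b) \<in> E \<Longrightarrow> (c,d) \<in> E \<Longrightarrow> a \<noteq> b \<Longrightarrow> c \<noteq> d \<Longrightarrow>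
    lca T {a,b} = lca T {c,d} \<Longrightarrow> (a,c) \<in> E"
  unfolding lca_compatible_def by blast

definition forest_of :: "('a \<times> 'a) set \<Rightarrow> 'a set set" where
  "forest_of E = {E `` {a} \<inter> D | a D. a \<in> I \<and> D \<in> T \<and> a \<in> D}"

abbreviation below_tree :: "'a set set set" where
  "below_tree \<equiv> forest_interval I (zero_forest I) T"

lemma below_tree_iff: "H \<in> below_tree \<longleftrightarrow> is_forest I H \<and> inj_on (lca T) (inner H)"
proof -
  have "forest_le I (zero_forest I) H" if H: "is_forest I H"
  proof -
    have "\<forall>C\<in>zero_forest I. \<exists>D\<in>H. C \<subseteq> D"
      using forest_singleton[OF H] unfolding zero_forest_def by blast
    then show ?thesis
      unfolding forest_le_iff_lca[OF finite_leaves] by (simp add: is_forest_zero_forest inner_zero_forest H)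
  qed
  moreover have "\<forall>C\<in>H. \<exists>D\<in>T. C \<subseteq> D" if "is_forest I H"
    using forest_cluster_subset[OF that] root_in_tree by blast
  ultimately show ?thesis
    unfolding forest_interval_def forest_le_iff_lca[OF finite_leaves] using tree_forest by blast
qed

context
  fixes H assumes forest: "is_forest I H" and lca_inj: "inj_on (lca T) (inner H)"
begin

lemma lca_cluster:
  assumes "C \<in> H"
  shows "lca T C \<in> T" "C \<subseteq> lca T C" "\<And>D. D \<in> T \<Longrightarrow> C \<subseteq> D \<Longrightarrow> lca T C \<subseteq> D"
  using lca_tree[OF forest_cluster_nonempty[OF forest assms] forest_cluster_subset[OF forest assms]]
  by auto

lemma lca_children_disjoint:
  assumes C: "C \<in> inner H" and ch: "children H C A B"
  shows "lca T A \<inter> lca T B = {}"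
proof -
  note c = childrenD[OF ch]
  have not_below: False if ch': "children H C A' B'" and sub: "lca T A' \<subseteq> lca T B'" for A' B'
  proof -
    note c' = childrenD[OF ch'] and LA = lca_cluster[OF c'(1)] and LB = lca_cluster[OF c'(2)]
      and LC = lca_cluster[OF inner_in_forest[OF C]]
    have "C \<subseteq> lca T B'" using LA(2) LB(2) sub c'(6) by auto
    then have eq: "lca T B' = lca T C" using LC(3)[OF LB(1)] LB(3)[OF LC(1)] LC(2) c'(6) by auto
    show False
    proof (cases "B' \<in> inner H")
      case True
      then show False using inj_onD[OF lca_inj eq True C] c'(8) by simp
    next
      case False
      then obtain b where "B' = {b}" "b \<in> I"
        using c'(2) forest_cluster_subset[OF forest c'(2)] unfolding inner_def by auto
      then show False using lca_singleton LA(2) sub c'(3,5) by auto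
    qed
  qed
  show ?thesis
  proof (rule ccontr)
    assume "lca T A \<inter> lca T B \<noteq> {}"
    then obtain x where "x \<in> lca T A" "x \<in> lca T B" by blast
    then show False
      using tree_nested[OF lca_cluster(1)[OF c(1)] lca_cluster(1)[OF c(2)]]
        not_below[OF ch] not_below[OF children_sym[OF ch]] by blast
  qed
qed

lemma nested_in_child:
  assumes C: "C \<in> H" "C \<subset> C'" and ch: "children H C' A B"
  shows "C \<subseteq> A \<or> C \<subseteq> B"
proof -
  note nested = laminar_nested[OF forest_laminar[OF forest] C(1)]
  have "C \<subseteq> A" if ch': "children H C' A B" and x: "x \<in> C" "x \<in> A" for A B x
  proof (rule ccontr)
    note c = childrenD[OF ch']
    assume "\<not> C \<subseteq> A"
    then have "A \<subseteq> C" using nested[OF c(1) x] by blast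
    obtain y where "y \<in> C" "y \<notin> A" using \<open>\<not> C \<subseteq> A\<close> by blast
    then have "y \<in> B" using C(2) c(6) by blast
    then have "C \<subseteq> B \<or> B \<subseteq> C" using nested[OF c(2) \<open>y \<in> C\<close>] by blast
    moreover have "\<not> C \<subseteq> B" using x c(5) by blast
    ultimately have "C' \<subseteq> C" using \<open>A \<subseteq> C\<close> c(6) by blast
    then show False using C(2) by blast
  qed
  moreover obtain x where "x \<in> C" using forest_cluster_nonempty[OF forest C(1)] by blast
  moreover have "x \<in> A \<or> x \<in> B" using calculation(2) C(2) childrenD(6)[OF ch] by blast
  ultimately show ?thesis using ch children_sym[OF ch] by blast
qed

text \<open>The siblings met on the way up from C to C' have ancestors in T disjoint from that of C.\<close>
lemma cluster_inter_lca:
  assumes "C' \<in> H" "C \<in> H" "C \<subseteq> C'"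
  shows "C' \<inter> lca T C = C"
  using assms
proof (induction "card C'" arbitrary: C' rule: less_induct)
  case less
  show ?case
  proof (cases "C = C'")
    case True
    then show ?thesis using lca_cluster(2)[OF less.prems(2)] by auto
  next
    case False
    then have ps: "C \<subset> C'" using less.prems(3) by auto
    obtain x y where "x \<in> C" "y \<in> C'" "y \<notin> C"
      using forest_cluster_nonempty[OF forest less.prems(2)] ps by auto
    then have C': "C' \<in> inner H" using inner_if_two_points[OF less.prems(1)] ps by blast
    then obtain A B where ch: "children H C' A B" using forest_inner_children[OF forest] by blast
    have step: "C' \<inter> lca T C = C" if ch': "children H C' A' B'" and "C \<subseteq> A'" for A' B'
    proof -
      note c = childrenD[OF ch']
      have "card A' < card C'"
        using c(7) finite_forest_cluster[OF finite_leaves forest less.prems(1)] by (simp add: psubset_card_mono)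
      then have IH: "A' \<inter> lca T C = C" using less.hyps c(1) less.prems(2) that(2) by simp
      have "lca T C \<subseteq> lca T A'"
        using lca_cluster(3)[OF less.prems(2) lca_cluster(1)[OF c(1)]] lca_cluster(2)[OF c(1)] that(2)
        by auto
      then have "B' \<inter> lca T C = {}"
        using lca_children_disjoint[OF C' ch'] lca_cluster(2)[OF c(2)] by auto
      then show ?thesis using IH c(6) by auto
    qed
    show ?thesis
      using nested_in_child[OF less.prems(2) ps ch] step[OF ch] step[OF children_sym[OF ch]] by auto
  qed
qed

text \<open>Otherwise D would contain the disjoint ancestors of both children, hence K.\<close>
lemma tree_cluster_misses_sibling:
  assumes K: "K \<in> inner H" and ch: "children H K A B" and "D \<in> T" "a \<in> A" "a \<in> D" "\<not> K \<subseteq> D"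
  shows "D \<inter> B = {}"
proof (rule ccontr)
  assume "D \<inter> B \<noteq> {}"
  then obtain b where b: "b \<in> D" "b \<in> B" by blast
  note c = childrenD[OF ch] and LA = lca_cluster[OF c(1)] and LB = lca_cluster[OF c(2)]
  have "lca T A \<subseteq> D"
    using tree_nested[OF assms(3) LA(1) assms(5)] LA(2) assms(4) b LB(2) lca_children_disjoint[OF K ch]
    by blast
  moreover have "lca T B \<subseteq> D"
    using tree_nested[OF assms(3) LB(1) b(1)] LA(2) LB(2) assms(4,5) b(2) lca_children_disjoint[OF K ch]
    by blast
  ultimately have "K \<subseteq> D" using LA(2) LB(2) c(6) by auto
  then show False using assms(6) by simp
qed

lemma cluster_inter_tree:
  assumes "K \<in> H" "D \<in> T" "a \<in> K" "a \<in> D"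
  shows "K \<inter> D \<in> H"
  using assms
proof (induction "card K" arbitrary: K rule: less_induct)
  case less
  show ?case
  proof (cases "K \<subseteq> D")
    case True
    then show ?thesis using less.prems(1) by (simp add: Int_absorb2)
  next
    case False
    then have K: "K \<in> inner H"
      using less.prems(1,3,4) by (auto simp: inner_def)
    then obtain A B where ch: "children H K A B" using forest_inner_children[OF forest] by blast
    have step: "K \<inter> D \<in> H" if ch': "children H K A' B'" and "a \<in> A'" for A' B'
    proof -
      note c = childrenD[OF ch']
      have "K \<inter> D = A' \<inter> D"
        using tree_cluster_misses_sibling[OF K ch' less.prems(2) that(2) less.prems(4) False] c(6) by auto
      moreover have "card A' < card K"
        using c(7) finite_forest_cluster[OF finite_leaves forest less.prems(1)] by (simp add: psubset_card_mono)
      ultimately show ?thesis using less.hyps c(1) less.prems(2,4) that(2) by simp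
    qed
    show ?thesis
      using less.prems(3) childrenD(6)[OF ch] step[OF ch] step[OF children_sym[OF ch]] by auto
  qed
qed

lemma forest_of_same_tree: "forest_of (same_tree H) = H"
proof
  show "H \<subseteq> forest_of (same_tree H)"
  proof
    fix C assume C: "C \<in> H"
    obtain a where a: "a \<in> C" using forest_cluster_nonempty[OF forest C] by auto
    then have aI: "a \<in> I" using forest_cluster_subset[OF forest C] by auto
    note cls = same_tree_class[OF finite_leaves forest aI]
    have "same_tree H `` {a} \<inter> lca T C = C"
      using cluster_inter_lca[OF cls(1) C cls(3)[OF C a]] .
    then show "C \<in> forest_of (same_tree H)"
      unfolding forest_of_def using aI a lca_cluster(1,2)[OF C] by blast
  qed
  show "forest_of (same_tree H) \<subseteq> H"
  proof
    fix C assume "C \<in> forest_of (same_tree H)"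
    then obtain a D where "C = same_tree H `` {a} \<inter> D" "a \<in> I" "D \<in> T" "a \<in> D"
      unfolding forest_of_def by blast
    then show "C \<in> H"
      using cluster_inter_tree same_tree_class(1,2)[OF finite_leaves forest] by blast
  qed
qed

lemma same_tree_lca_compatible: "lca_compatible (same_tree H)"
  unfolding lca_compatible_def
proof (intro allI impI)
  fix a b c d
  assume ab: "(a,b) \<in> same_tree H" and cd: "(c,d) \<in> same_tree H" and "a \<noteq> b" "c \<noteq> d"
    and eq: "lca T {a,b} = lca T {c,d}"
  have "same_tree H \<subseteq> I \<times> I" using same_tree_equiv[OF forest] by (simp add: equiv_def)
  then have I: "a \<in> I" "b \<in> I" "c \<in> I" "d \<in> I" using ab cd by blast+
  define w where "w = lca T {a,b}"
  \<comment> \<open>the clusters of H cut out by w around a and around c have the same ancestor w\<close>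
  have cut: "same_tree H `` {p} \<inter> w \<in> inner H \<and> lca T (same_tree H `` {p} \<inter> w) = w"
    if "p \<in> I" "q \<in> I" "(p,q) \<in> same_tree H" "p \<noteq> q" "lca T {p,q} = w" for p q
  proof -
    note cls = same_tree_class[OF finite_leaves forest that(1)] and pq = lca_pair[OF that(1,2)]
    have C: "same_tree H `` {p} \<inter> w \<in> H"
      using cluster_inter_tree[OF cls(1) pq(1) cls(2) pq(2)] that(5) by simp
    have pq_in: "p \<in> same_tree H `` {p} \<inter> w" "q \<in> same_tree H `` {p} \<inter> w"
      using cls(2) that(3) pq(2,3) that(5) by auto
    have "lca T (same_tree H `` {p} \<inter> w) = w"
      using lca_eq_lca_pair[OF forest_cluster_subset[OF forest C] pq_in] that(5) by auto
    then show ?thesis using inner_if_two_points[OF C pq_in that(4)] by blast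
  qed
  have a_cut: "same_tree H `` {a} \<inter> w \<in> inner H" "lca T (same_tree H `` {a} \<inter> w) = w"
    using cut[OF I(1,2) ab \<open>a \<noteq> b\<close>] w_def by auto
  have c_cut: "same_tree H `` {c} \<inter> w \<in> inner H" "lca T (same_tree H `` {c} \<inter> w) = w"
    using cut[OF I(3,4) cd \<open>c \<noteq> d\<close>] w_def eq by auto
  have "same_tree H `` {a} \<inter> w = same_tree H `` {c} \<inter> w"
    using inj_onD[OF lca_inj _ a_cut(1) c_cut(1)] a_cut(2) c_cut(2) by simp
  moreover have "c \<in> same_tree H `` {c} \<inter> w"
    using lca_pair(2)[OF I(3,4)] same_tree_class(2)[OF finite_leaves forest I(3)] eq w_def by auto
  ultimately have "c \<in> same_tree H `` {a}" by (metis IntD1)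
  then show "(a,c) \<in> same_tree H" by simp
qed

end

end

context finite_tree
begin

lemma forest_of_memI: "a \<in> I \<Longrightarrow> D \<in> T \<Longrightarrow> a \<in> D \<Longrightarrow> E `` {a} \<inter> D \<in> forest_of E"
  unfolding forest_of_def by blast

lemma forest_of_cluster:
  assumes E: "equiv I E" and C: "C \<in> forest_of E" and a: "a \<in> C"
  shows "C = E `` {a} \<inter> lca T C" "C \<subseteq> I" "lca T C \<in> T" "C \<subseteq> lca T C"
proof -
  obtain b D where C_eq: "C = E `` {b} \<inter> D" and "b \<in> I" "D \<in> T"
    using C unfolding forest_of_def by blast
  show "C \<subseteq> I" using C_eq equiv_type[OF E] by blast
  note L = lca_tree[OF _ this]
  show "lca T C \<in> T" "C \<subseteq> lca T C" using L(1,2) a by blast+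
  have "E `` {b} = E `` {a}" using equiv_class_eq[OF E] a C_eq by blast
  moreover have "lca T C \<subseteq> D" using L(3)[OF _ \<open>D \<in> T\<close>] C_eq a by blast
  ultimately show "C = E `` {a} \<inter> lca T C" using L(2) C_eq a by blast
qed

text \<open>The two children of a cluster are cut out by the two children of its ancestor in T.\<close>
lemma forest_of_children:
  assumes E: "equiv I E" and C: "C \<in> forest_of E" and pq: "p \<in> C" "q \<in> C" "p \<noteq> q"
  shows "\<exists>A B. children (forest_of E) C A B"
proof -
  note F = forest_of_cluster[OF E C pq(1)]
  obtain L R where ch: "children T (lca T C) L R" and "C \<inter> L \<noteq> {}" "C \<inter> R \<noteq> {}"
    using lca_split[OF F(2) pq] .
  then obtain l r where lr: "l \<in> C \<inter> L" "r \<in> C \<inter> R" by blast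
  have classes: "E `` {l} = E `` {p}" "E `` {r} = E `` {p}"
    using equiv_class_eq[OF E] lr F(1) by blast+
  have "l \<in> I" "r \<in> I" using lr F(2) by blast+
  then have "E `` {l} \<inter> L \<in> forest_of E" "E `` {r} \<inter> R \<in> forest_of E"
    using forest_of_memI childrenD(1,2)[OF ch] lr by blast+
  then have "E `` {p} \<inter> L \<in> forest_of E" "E `` {p} \<inter> R \<in> forest_of E"
    unfolding classes .
  moreover have "C = (E `` {p} \<inter> L) \<union> (E `` {p} \<inter> R)"
    using F(1) childrenD(6)[OF ch] by blast
  moreover have "l \<in> E `` {p} \<inter> L" "r \<in> E `` {p} \<inter> R" "L \<inter> R = {}"
    using lr F(1) childrenD(5)[OF ch] by blast+
  ultimately have "children (forest_of E) C (E `` {p} \<inter> L) (E `` {p} \<inter> R)"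
    unfolding children_def by blast
  then show ?thesis by blast
qed

lemma forest_of_is_forest:
  assumes E: "equiv I E"
  shows "is_forest I (forest_of E)"
  unfolding is_forest_def
proof (intro conjI ballI)
  fix C assume C: "C \<in> forest_of E"
  then obtain b D where "C = E `` {b} \<inter> D" "b \<in> I" "b \<in> D"
    unfolding forest_of_def by blast
  then show "C \<noteq> {}" using equiv_class_self[OF E] by blast
  show "C \<subseteq> I" using C forest_of_cluster(2)[OF E] by blast
next
  fix i assume "i \<in> I"
  moreover have "E `` {i} \<inter> {i} = {i}" using equiv_class_self[OF E \<open>i \<in> I\<close>] by blast
  ultimately show "{i} \<in> forest_of E"
    using forest_of_memI[OF \<open>i \<in> I\<close> forest_singleton[OF tree_forest \<open>i \<in> I\<close>], of E] by simp
next
  fix A B assume A: "A \<in> forest_of E" and B: "B \<in> forest_of E"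
  show "A \<subseteq> B \<or> B \<subseteq> A \<or> A \<inter> B = {}"
  proof (cases "A \<inter> B = {}")
    case False
    then obtain x where x: "x \<in> A" "x \<in> B" by blast
    note FA = forest_of_cluster[OF E A x(1)] and FB = forest_of_cluster[OF E B x(2)]
    have "lca T A \<subseteq> lca T B \<or> lca T B \<subseteq> lca T A"
      using tree_nested[OF FA(3) FB(3)] FA(4) FB(4) x by blast
    then show ?thesis using FA(1) FB(1) by blast
  qed simp
next
  fix C assume Ci: "C \<in> inner (forest_of E)"
  then have C: "C \<in> forest_of E" by (rule inner_in_forest)
  obtain p D where "C = E `` {p} \<inter> D" "p \<in> I" "p \<in> D"
    using C unfolding forest_of_def by blast
  then have "p \<in> C" using equiv_class_self[OF E] by blast
  moreover obtain q where "q \<in> C" "q \<noteq> p"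
    using Ci \<open>p \<in> C\<close> unfolding inner_def by blast
  ultimately show "\<exists>A B. children (forest_of E) C A B"
    using forest_of_children[OF E C] by blast
qed

lemma same_tree_forest_of:
  assumes E: "equiv I E"
  shows "same_tree (forest_of E) = E"
proof (intro equalityI subrelI)
  fix a b assume "(a,b) \<in> same_tree (forest_of E)"
  then obtain C where C: "C \<in> forest_of E" "a \<in> C" and "b \<in> C" by (rule same_treeE)
  then have "b \<in> E `` {a} \<inter> lca T C" by (subst (asm) forest_of_cluster(1)[OF E C])
  then show "(a,b) \<in> E" by blast
next
  fix a b assume ab: "(a,b) \<in> E"
  then have "a \<in> I" using equiv_type[OF E] by blast
  then have "E `` {a} \<inter> I \<in> forest_of E"
    using forest_of_memI root_in_tree by blast
  moreover have "a \<in> E `` {a} \<inter> I" "b \<in> E `` {a} \<inter> I"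
    using equiv_class_self[OF E \<open>a \<in> I\<close>] ab equiv_type[OF E] by blast+
  ultimately show "(a,b) \<in> same_tree (forest_of E)" by (rule same_treeI)
qed

lemma forest_of_lca_inj:
  assumes E: "equiv I E" and compatible: "lca_compatible E"
  shows "inj_on (lca T) (inner (forest_of E))"
proof (rule inj_onI)
  have pair: "\<exists>p q. p \<in> C \<and> q \<in> C \<and> p \<noteq> q \<and> lca T {p,q} = lca T C"
    if Ci: "C \<in> inner (forest_of E)" for C
  proof -
    obtain p q where pq: "p \<in> C" "q \<in> C" "p \<noteq> q"
      using Ci forest_cluster_nonempty[OF forest_of_is_forest[OF E] inner_in_forest[OF Ci]]
      unfolding inner_def by blast
    obtain p' q' where "p' \<in> C" "q' \<in> C" "p' \<noteq> q'" "lca T {p',q'} = lca T C"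
      using lca_attained_by_pair[OF forest_of_cluster(2)[OF E inner_in_forest[OF Ci] pq(1)] pq] .
    then show ?thesis by blast
  qed
  fix C1 C2 assume C1: "C1 \<in> inner (forest_of E)" and C2: "C2 \<in> inner (forest_of E)"
    and eq: "lca T C1 = lca T C2"
  obtain p1 q1 where 1: "p1 \<in> C1" "q1 \<in> C1" "p1 \<noteq> q1" "lca T {p1,q1} = lca T C1" using pair[OF C1] by blast
  obtain p2 q2 where 2: "p2 \<in> C2" "q2 \<in> C2" "p2 \<noteq> q2" "lca T {p2,q2} = lca T C2" using pair[OF C2] by blast
  have C1_eq: "C1 = E `` {p1} \<inter> lca T C1" using forest_of_cluster(1)[OF E inner_in_forest[OF C1] 1(1)] .
  have C2_eq: "C2 = E `` {p2} \<inter> lca T C2" using forest_of_cluster(1)[OF E inner_in_forest[OF C2] 2(1)] .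
  have "(p1,q1) \<in> E" "(p2,q2) \<in> E" using C1_eq 1(2) C2_eq 2(2) by blast+
  from lca_compatibleD[OF compatible this 1(3) 2(3)] have "(p1,p2) \<in> E"
    using 1(4) 2(4) eq by simp
  then have "E `` {p1} = E `` {p2}" by (rule equiv_class_eq[OF E])
  then show "C1 = C2" using C1_eq C2_eq eq by simp
qed

lemma forest_of_below_tree:
  assumes "equiv I E" "lca_compatible E"
  shows "forest_of E \<in> below_tree"
  using below_tree_iff forest_of_is_forest forest_of_lca_inj assms by blast

end

context finite_tree
begin

lemma lca_in_coarser_forest:
  assumes H: "H \<in> below_tree" and H': "H' \<in> below_tree" and sub: "same_tree H \<subseteq> same_tree H'"
    and C: "C \<in> H" and a: "a \<in> C"
  shows "lca H' C = same_tree H' `` {a} \<inter> lca T C" "lca T (lca H' C) = lca T C"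
proof -
  have fH: "is_forest I H" "inj_on (lca T) (inner H)" and fH': "is_forest I H'" "inj_on (lca T) (inner H')"
    using H H' below_tree_iff by blast+
  have aI: "a \<in> I" using forest_cluster_subset[OF fH(1) C] a by blast
  note LC = lca_cluster[OF fH C] and cls' = same_tree_class[OF finite_leaves fH'(1) aI]
  define X where "X = same_tree H' `` {a} \<inter> lca T C"
  have X: "X \<in> H'"
    unfolding X_def using cluster_inter_tree[OF fH' cls'(1) LC(1) cls'(2)] LC(2) a by blast
  have "C \<subseteq> same_tree H' `` {a}"
    using same_tree_class(3)[OF finite_leaves fH(1) aI C a] sub by blast
  then have CX: "C \<subseteq> X" unfolding X_def using LC(2) by blast
  have "X \<subseteq> D" if D: "D \<in> H'" "C \<subseteq> D" for D
  proof -
    have D': "D \<in> forest_of (same_tree H')" "a \<in> D"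
      using D a forest_of_same_tree[OF fH'] by blast+
    note FD = forest_of_cluster[OF same_tree_equiv[OF fH'(1)] D']
    have "lca T C \<subseteq> lca T D" using LC(3)[OF FD(3)] FD(4) D(2) by blast
    then show ?thesis unfolding X_def using FD(1) by blast
  qed
  then show eq: "lca H' C = X" by (intro lca_eqI[OF X CX])
  have "X \<subseteq> I" using forest_cluster_subset[OF fH'(1) X] .
  note LX = lca_tree[OF _ this]
  have X_ne: "X \<noteq> {}" using CX a by blast
  have "X \<subseteq> lca T C" unfolding X_def by blast
  then have "lca T X \<subseteq> lca T C" using LX(3)[OF X_ne LC(1)] by blast
  moreover have "lca T C \<subseteq> lca T X" using LC(3)[OF LX(1)[OF X_ne]] LX(2)[OF X_ne] CX by blast
  ultimately show "lca T (lca H' C) = lca T C" using eq by blast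
qed

lemma forest_le_iff_same_tree:
  assumes H: "H \<in> below_tree" and H': "H' \<in> below_tree"
  shows "forest_le I H H' \<longleftrightarrow> same_tree H \<subseteq> same_tree H'"
proof
  assume "forest_le I H H'"
  then have above: "\<forall>C\<in>H. \<exists>D\<in>H'. C \<subseteq> D" by (simp add: forest_le_iff_lca[OF finite_leaves])
  show "same_tree H \<subseteq> same_tree H'"
  proof (rule subrelI)
    fix a b assume "(a,b) \<in> same_tree H"
    then obtain C where "C \<in> H" "a \<in> C" "b \<in> C" by (rule same_treeE)
    moreover obtain D where "D \<in> H'" "C \<subseteq> D" using above \<open>C \<in> H\<close> by blast
    ultimately show "(a,b) \<in> same_tree H'" using same_treeI[of D H' a b] by blast
  qed
next
  assume sub: "same_tree H \<subseteq> same_tree H'"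
  have fH: "is_forest I H" "inj_on (lca T) (inner H)" and fH': "is_forest I H'"
    using H H' below_tree_iff by blast+
  have "\<forall>C\<in>H. \<exists>D\<in>H'. C \<subseteq> D"
  proof
    fix C assume C: "C \<in> H"
    then obtain a where a: "a \<in> C" using forest_cluster_nonempty[OF fH(1)] by blast
    then have "a \<in> I" using forest_cluster_subset[OF fH(1) C] by blast
    have "C \<subseteq> same_tree H' `` {a}"
      using same_tree_class(3)[OF finite_leaves fH(1) \<open>a \<in> I\<close> C a] sub by blast
    then show "\<exists>D\<in>H'. C \<subseteq> D" using same_tree_class(1)[OF finite_leaves fH' \<open>a \<in> I\<close>] by blast
  qed
  moreover have "inj_on (lca H') (inner H)"
  proof (rule inj_onI)
    fix C1 C2 assume C1: "C1 \<in> inner H" and C2: "C2 \<in> inner H" and "lca H' C1 = lca H' C2"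
    have "lca T (lca H' C) = lca T C" if C: "C \<in> inner H" for C
      using forest_cluster_nonempty[OF fH(1) inner_in_forest[OF C]]
        lca_in_coarser_forest(2)[OF H H' sub inner_in_forest[OF C]] by blast
    then have "lca T C1 = lca T C2" using C1 C2 \<open>lca H' C1 = lca H' C2\<close> by metis
    then show "C1 = C2" using inj_onD[OF fH(2) _ C1 C2] by blast
  qed
  ultimately show "forest_le I H H'"
    by (simp add: forest_le_iff_lca[OF finite_leaves] fH fH')
qed

lemma finite_below_tree: "finite below_tree"
proof (rule finite_subset)
  show "below_tree \<subseteq> Pow (Pow I)"
    using forest_cluster_subset below_tree_iff by blast
  show "finite (Pow (Pow I))" using finite_leaves by simp
qed

lemma below_tree_eqI: "H \<in> below_tree \<Longrightarrow> H' \<in> below_tree \<Longrightarrow> same_tree H = same_tree H' \<Longrightarrow> H = H'"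
  using forest_of_same_tree below_tree_iff by metis

lemma same_tree_admissible:
  assumes "H \<in> below_tree"
  shows "equiv I (same_tree H)" "lca_compatible (same_tree H)"
  using same_tree_equiv same_tree_lca_compatible assms below_tree_iff by blast+

end

section \<open>Spanned vertices and the covers of the interval\<close>

definition merge_classes :: "('a \<times> 'a) set \<Rightarrow> 'a \<Rightarrow> 'a \<Rightarrow> ('a \<times> 'a) set" where
  "merge_classes E a b = E \<union> (E `` {a} \<union> E `` {b}) \<times> (E `` {a} \<union> E `` {b})"

lemma equiv_class_closed:
  assumes "equiv A E" "(y,z) \<in> E"
  shows "y \<in> E `` {a} \<longleftrightarrow> z \<in> E `` {a}"
proof -
  have "sym E" "trans E" using assms(1) by (blast elim: equivE)+
  then show ?thesis
    using transD[of E a y z] transD[of E a z y] symD[OF _ assms(2)] assms(2) by blast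
qed

lemma merge_classes_equiv:
  assumes E: "equiv A E" and "a \<in> A" "b \<in> A"
  shows "equiv A (merge_classes E a b)"
proof (rule equivI)
  have E_props: "E \<subseteq> A \<times> A" "refl_on A E" "sym E" "trans E" using E by (blast elim: equivE)+
  let ?U = "E `` {a} \<union> E `` {b}"
  have "?U \<subseteq> A" using E_props(1) by blast
  then show "merge_classes E a b \<subseteq> A \<times> A"
    unfolding merge_classes_def using E_props(1) by blast
  show "refl_on A (merge_classes E a b)"
    using E_props(2) unfolding merge_classes_def refl_on_def by blast
  show "sym (merge_classes E a b)"
    using E_props(3) unfolding merge_classes_def sym_def by blast
  show "trans (merge_classes E a b)"
  proof (rule transI)
    fix x y z assume xy: "(x,y) \<in> merge_classes E a b" and yz: "(y,z) \<in> merge_classes E a b"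
    have closed: "y \<in> ?U \<longleftrightarrow> z \<in> ?U" if "(y,z) \<in> E" for y z
      using equiv_class_closed[OF E that] by blast
    consider "(x,y) \<in> E" "(y,z) \<in> E" | "x \<in> ?U" "y \<in> ?U" "z \<in> ?U"
      using xy yz closed symD[OF E_props(3)] unfolding merge_classes_def by blast
    then show "(x,z) \<in> merge_classes E a b"
      unfolding merge_classes_def using transD[OF E_props(4)] by cases blast+
  qed
qed

lemma merge_classes_least:
  assumes E': "equiv A E'" and "E \<subseteq> E'" "(a,b) \<in> E'"
  shows "merge_classes E a b \<subseteq> E'"
proof -
  have "sym E'" "trans E'" using E' by (blast elim: equivE)+
  have "E `` {a} \<union> E `` {b} \<subseteq> E' `` {a}"
    using assms(2,3) transD[OF \<open>trans E'\<close>, of a b] by blast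
  moreover have "(x,y) \<in> E'" if "x \<in> E' `` {a}" "y \<in> E' `` {a}" for x y
    using that symD[OF \<open>sym E'\<close>] transD[OF \<open>trans E'\<close>] by blast
  ultimately show ?thesis
    unfolding merge_classes_def using assms(2) by blast
qed

lemma merge_classes_atom:
  assumes E: "equiv A E" and E': "equiv A E'" "E \<subseteq> E'" "E' \<subseteq> merge_classes E a b" "E' \<noteq> E"
  shows "E' = merge_classes E a b"
proof -
  have "sym E'" "trans E'" using E'(1) by (blast elim: equivE)+
  have "\<not> E' \<subseteq> E" using E'(2,4) by blast
  then obtain p q where pq: "(p,q) \<in> E'" "(p,q) \<notin> E" by auto
  then have "p \<in> E `` {a} \<union> E `` {b}" "q \<in> E `` {a} \<union> E `` {b}"
    using E'(3) unfolding merge_classes_def by blast+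
  moreover have "\<not> (p \<in> E `` {c} \<and> q \<in> E `` {c})" for c
    using pq(2) equiv_class_closed[OF E] symD[of E] E by (blast elim: equivE)
  ultimately have "(a,p) \<in> E' \<and> (b,q) \<in> E' \<or> (b,p) \<in> E' \<and> (a,q) \<in> E'"
    using E'(2) by blast
  then have "(a,b) \<in> E'"
    using pq(1) symD[OF \<open>sym E'\<close>] transD[OF \<open>trans E'\<close>] by blast
  then show ?thesis using merge_classes_least[OF E'(1,2)] E'(3) by blast
qed

context finite_tree
begin

text \<open>For E = same_tree H, spanned E is the image of the inner vertices of H in T.\<close>
definition spanned :: "('a \<times> 'a) set \<Rightarrow> 'a set set" where
  "spanned E = {lca T {a,b} | a b. (a,b) \<in> E \<and> a \<noteq> b}"

lemma spannedI: "(a,b) \<in> E \<Longrightarrow> a \<noteq> b \<Longrightarrow> lca T {a,b} \<in> spanned E"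
  unfolding spanned_def by blast

lemma spannedE:
  assumes "w \<in> spanned E"
  obtains a b where "(a,b) \<in> E" "a \<noteq> b" "w = lca T {a,b}"
  using assms unfolding spanned_def by blast

lemma spanned_mono: "E \<subseteq> E' \<Longrightarrow> spanned E \<subseteq> spanned E'"
  unfolding spanned_def by blast

lemma spanned_subset_tree: "equiv I E \<Longrightarrow> spanned E \<subseteq> T"
  using lca_pair(1) equiv_type by (fastforce elim: spannedE)

text \<open>By induction on the ancestor of (c, d): a pair of E with the same ancestor is split
crosswise against c, d, and the crosswise pairs lie strictly lower.\<close>
lemma spanned_below_determines:
  assumes E: "equiv I E" and E': "equiv I E'" "lca_compatible E'" and "E \<subseteq> E'"
  shows "(c,d) \<in> E' \<Longrightarrow> \<forall>w\<in>spanned E'. w \<subseteq> lca T {c,d} \<longrightarrow> w \<in> spanned E \<Longrightarrow> (c,d) \<in> E"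
proof (induction "card (lca T {c,d})" arbitrary: c d rule: less_induct)
  case less
  have cd: "c \<in> I" "d \<in> I" using less.prems(1) equiv_type[OF E'(1)] by blast+
  have "sym E" "trans E" "sym E'" "trans E'" using E E'(1) by (blast elim: equivE)+
  show ?case
  proof (cases "c = d")
    case True
    then show ?thesis using equiv_class_self[OF E cd(1)] by simp
  next
    case False
    define w where "w = lca T {c,d}"
    have "w \<in> spanned E" using less.prems spannedI[OF less.prems(1) False] w_def by blast
    then obtain e f where ef: "(e,f) \<in> E" "e \<noteq> f" "w = lca T {e,f}" by (rule spannedE)
    have efI: "e \<in> I" "f \<in> I" using ef(1) equiv_type[OF E] by blast+
    have below: "(p,q) \<in> E" if "(p,q) \<in> E'" "lca T {p,q} \<subset> w" for p q
    proof -
      have "card (lca T {p,q}) < card (lca T {c,d})"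
        using psubset_card_mono[OF finite_cluster[OF lca_pair(1)[OF cd]]]
          that(2) w_def by blast
      moreover have "\<forall>u\<in>spanned E'. u \<subseteq> lca T {p,q} \<longrightarrow> u \<in> spanned E"
        using less.prems(2) that(2) w_def by blast
      ultimately show ?thesis using less.hyps that(1) by blast
    qed
    have "(c,e) \<in> E'"
      using lca_compatibleD[OF E'(2) less.prems(1) _ False ef(2)] ef(1,3) w_def \<open>E \<subseteq> E'\<close> by blast
    moreover have "(e,f) \<in> E'" "(d,c) \<in> E'" using ef(1) \<open>E \<subseteq> E'\<close> less.prems(1) symD[OF \<open>sym E'\<close>] by blast+
    ultimately have "(c,e) \<in> E'" "(c,f) \<in> E'" "(d,e) \<in> E'" "(d,f) \<in> E'"
      using transD[OF \<open>trans E'\<close>] by blast+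
    then have "((c,e) \<in> E \<and> (d,f) \<in> E) \<or> ((c,f) \<in> E \<and> (d,e) \<in> E)"
      using lca_four_points[OF cd efI False ef(2)] ef(3) w_def below by blast
    then show ?thesis using ef(1) symD[OF \<open>sym E\<close>] transD[OF \<open>trans E\<close>] by blast
  qed
qed

lemma eq_if_spanned_eq:
  assumes "equiv I E" "equiv I E'" "lca_compatible E'" "E \<subseteq> E'" "spanned E = spanned E'"
  shows "E = E'"
proof
  show "E' \<subseteq> E"
  proof (rule subrelI)
    fix c d assume "(c,d) \<in> E'"
    then show "(c,d) \<in> E" using spanned_below_determines[OF assms(1-4)] assms(5) by blast
  qed
qed (rule assms(4))

end

context finite_tree
begin

text \<open>Compare the nested ancestors of a, p and of b, q; if they coincide, compatibility puts
(a, b) into E.\<close>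
lemma outer_cross_pair_lca:
  assumes E: "equiv I E" "lca_compatible E" and ab_in_I: "a \<in> I" "b \<in> I" and "a \<noteq> b"
    and ab_not_in_E: "(a,b) \<notin> E"
    and ap: "(a,p) \<in> E" and bq: "(b,q) \<in> E" and p: "p \<notin> lca T {a,b}"
  shows "\<exists>e f. (e,f) \<in> E \<and> e \<noteq> f \<and> e \<in> E `` {a} \<union> E `` {b} \<and> lca T {p,q} = lca T {e,f}"
proof -
  have I: "p \<in> I" "q \<in> I" using ap bq equiv_type[OF E(1)] by blast+
  note v = lca_pair[OF ab_in_I] and \<alpha> = lca_pair[OF ab_in_I(1) I(1)] and \<beta> = lca_pair[OF ab_in_I(2) I(2)]
  have "a \<noteq> p" using p v(2) by blast
  have "lca T {a,b} \<subseteq> lca T {a,p} \<or> lca T {a,p} \<subseteq> lca T {a,b}" using tree_nested[OF v(1) \<alpha>(1) v(2) \<alpha>(2)] .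
  then have v\<alpha>: "lca T {a,b} \<subset> lca T {a,p}" using \<alpha>(3) p by blast
  then have b\<alpha>: "lca T {b,p} = lca T {a,p}"
    using lca_ultrametric[OF ab_in_I(2,1) I(1)] by (simp add: insert_commute)
  have "b \<in> lca T {a,p}" using v\<alpha> v(3) by blast
  then have "lca T {a,p} \<subseteq> lca T {b,q} \<or> lca T {b,q} \<subseteq> lca T {a,p}"
    using tree_nested[OF \<alpha>(1) \<beta>(1) _ \<beta>(2)] by blast
  moreover have "b \<noteq> q" if "lca T {a,p} \<subseteq> lca T {b,q}"
    using that \<alpha>(2) lca_singleton[OF ab_in_I(2)] \<open>a \<noteq> b\<close> by auto
  ultimately consider (up) "lca T {a,p} \<subset> lca T {b,q}" "b \<noteq> q" | (down) "lca T {b,q} \<subset> lca T {a,p}"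
    | (same) "lca T {a,p} = lca T {b,q}" "b \<noteq> q" by blast
  then show ?thesis
  proof cases
    case up
    then have "lca T {p,q} = lca T {b,q}"
      using lca_ultrametric[OF I(1) ab_in_I(2) I(2)] b\<alpha> by (simp add: insert_commute)
    then show ?thesis using bq up(2) equiv_class_self[OF E(1) ab_in_I(2)] by blast
  next
    case down
    then have "lca T {q,p} = lca T {b,p}"
      using lca_ultrametric[OF I(2) ab_in_I(2) I(1)] b\<alpha> by (simp add: insert_commute)
    then show ?thesis
      using ap \<open>a \<noteq> p\<close> equiv_class_self[OF E(1) ab_in_I(1)] b\<alpha> by (metis UnI1 insert_commute)
  next
    case same
    then show ?thesis using lca_compatibleD[OF E(2) ap bq \<open>a \<noteq> p\<close>] ab_not_in_E by blast
  qed
qed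

text \<open>The situation of a vertex lca T {a, b} that is minimal in spanned E' - spanned E.\<close>
context
  fixes E E' :: "('a \<times> 'a) set" and a b :: 'a
  assumes E: "equiv I E" "lca_compatible E" and E': "equiv I E'" "lca_compatible E'"
    and finer: "E \<subseteq> E'" and ab: "(a,b) \<in> E'" "a \<noteq> b"
    and new: "lca T {a,b} \<notin> spanned E"
    and lower_spanned: "\<forall>w\<in>spanned E'. w \<subset> lca T {a,b} \<longrightarrow> w \<in> spanned E"
begin

lemma sym_trans: "sym E" "trans E" "sym E'" "trans E'"
  using E(1) E'(1) by (blast elim: equivE)+

lemma ab_in_I: "a \<in> I" "b \<in> I"
  using ab(1) equiv_type[OF E'(1)] by blast+

lemma ab_not_in_E: "(a,b) \<notin> E"
  using spannedI[of a b E] ab(2) new by blast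

lemma lower_pair_in_E:
  assumes "(c,d) \<in> E'" "lca T {c,d} \<subset> lca T {a,b}"
  shows "(c,d) \<in> E"
  using spanned_below_determines[OF E(1) E' finer assms(1)] lower_spanned assms(2) by blast

lemma merged_pair_lca:
  assumes c: "c \<in> E `` {a} \<union> E `` {b}" and d: "d \<in> E `` {a} \<union> E `` {b}" and "c \<noteq> d"
  shows "lca T {c,d} = lca T {a,b} \<or>
    (\<exists>e f. (e,f) \<in> E \<and> e \<noteq> f \<and> e \<in> E `` {a} \<union> E `` {b} \<and> lca T {c,d} = lca T {e,f})"
proof (cases "(c,d) \<in> E")
  case True
  then show ?thesis using c \<open>c \<noteq> d\<close> by blast
next
  case False
  have cross: "lca T {p,q} = lca T {a,b} \<or>
      (\<exists>e f. (e,f) \<in> E \<and> e \<noteq> f \<and> e \<in> E `` {a} \<union> E `` {b} \<and> lca T {p,q} = lca T {e,f})"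
    if ap: "(a,p) \<in> E" and bq: "(b,q) \<in> E" for p q
  proof -
    have I: "p \<in> I" "q \<in> I" using ap bq equiv_type[OF E(1)] by blast+
    consider (inside) "p \<in> lca T {a,b}" "q \<in> lca T {a,b}" | (p_out) "p \<notin> lca T {a,b}"
      | (q_out) "q \<notin> lca T {a,b}" by blast
    then show ?thesis
    proof cases
      case inside
      have "(p,q) \<in> E'"
        using ap bq ab(1) finer symD[OF sym_trans(3)] transD[OF sym_trans(4)] by blast
      moreover have "(p,q) \<notin> E"
        using ap bq ab_not_in_E symD[OF sym_trans(1)] transD[OF sym_trans(2)] by blast
      ultimately have "\<not> lca T {p,q} \<subset> lca T {a,b}" using lower_pair_in_E by blast
      then show ?thesis using lca_pair(4)[OF I lca_pair(1)[OF ab_in_I]] inside by blast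
    next
      case p_out
      then show ?thesis
        using outer_cross_pair_lca[OF E ab_in_I ab(2) ab_not_in_E ap bq] by blast
    next
      case q_out
      have "(b,a) \<notin> E" using ab_not_in_E symD[OF sym_trans(1)] by blast
      then show ?thesis
        using outer_cross_pair_lca[OF E ab_in_I(2,1) ab(2)[symmetric] _ bq ap] q_out
        by (metis Un_commute insert_commute)
    qed
  qed
  have "(c \<in> E `` {a} \<and> d \<in> E `` {b}) \<or> (d \<in> E `` {a} \<and> c \<in> E `` {b})"
    using c d False equiv_class_closed[OF E(1)] symD[OF sym_trans(1)] transD[OF sym_trans(2)] by blast
  then show ?thesis using cross[of c d] cross[of d c] by (auto simp: insert_commute)
qed

lemma merged_class_separated:
  assumes pq: "(p,q) \<in> merge_classes E a b" "p \<in> E `` {a} \<union> E `` {b}" "p \<noteq> q"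
    and rs: "(r,s) \<in> merge_classes E a b" "r \<notin> E `` {a} \<union> E `` {b}" "r \<noteq> s"
    and eq: "lca T {p,q} = lca T {r,s}"
  shows False
proof -
  have "(r,s) \<in> E" using rs(1,2) unfolding merge_classes_def by blast
  have "q \<in> E `` {a} \<union> E `` {b}"
    using pq(1,2) equiv_class_closed[OF E(1)] unfolding merge_classes_def by blast
  from merged_pair_lca[OF pq(2) this pq(3)] show False
  proof
    assume "lca T {p,q} = lca T {a,b}"
    then show False using spannedI[OF \<open>(r,s) \<in> E\<close> rs(3)] eq new by simp
  next
    assume "\<exists>e f. (e,f) \<in> E \<and> e \<noteq> f \<and> e \<in> E `` {a} \<union> E `` {b} \<and> lca T {p,q} = lca T {e,f}"
    then obtain e f where "(e,f) \<in> E" "e \<noteq> f" "e \<in> E `` {a} \<union> E `` {b}" "lca T {p,q} = lca T {e,f}"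
      by blast
    then have "(e,r) \<in> E"
      using lca_compatibleD[OF E(2) _ \<open>(r,s) \<in> E\<close> _ rs(3)] eq by metis
    then show False using \<open>e \<in> E `` {a} \<union> E `` {b}\<close> rs(2) equiv_class_closed[OF E(1)] by blast
  qed
qed

lemma merge_classes_lca_compatible: "lca_compatible (merge_classes E a b)"
  unfolding lca_compatible_def
proof (intro allI impI)
  let ?U = "E `` {a} \<union> E `` {b}"
  fix p q r s
  assume pq: "(p,q) \<in> merge_classes E a b" and rs: "(r,s) \<in> merge_classes E a b"
    and "p \<noteq> q" "r \<noteq> s" and eq: "lca T {p,q} = lca T {r,s}"
  show "(p,r) \<in> merge_classes E a b"
  proof (cases "p \<in> ?U \<or> r \<in> ?U")
    case True
    then have "p \<in> ?U" "r \<in> ?U"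
      using merged_class_separated[OF pq _ \<open>p \<noteq> q\<close> rs _ \<open>r \<noteq> s\<close> eq]
        merged_class_separated[OF rs _ \<open>r \<noteq> s\<close> pq _ \<open>p \<noteq> q\<close> eq[symmetric]] by blast+
    then show ?thesis unfolding merge_classes_def by blast
  next
    case False
    then have "(p,q) \<in> E" "(r,s) \<in> E" using pq rs unfolding merge_classes_def by blast+
    then show ?thesis
      using lca_compatibleD[OF E(2) _ _ \<open>p \<noteq> q\<close> \<open>r \<noteq> s\<close> eq] unfolding merge_classes_def by blast
  qed
qed

lemma spanned_merge_classes: "spanned (merge_classes E a b) = insert (lca T {a,b}) (spanned E)"
proof
  show "spanned (merge_classes E a b) \<subseteq> insert (lca T {a,b}) (spanned E)"
  proof
    fix w assume "w \<in> spanned (merge_classes E a b)"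
    then obtain c d where cd: "(c,d) \<in> merge_classes E a b" "c \<noteq> d" "w = lca T {c,d}"
      by (rule spannedE)
    show "w \<in> insert (lca T {a,b}) (spanned E)"
    proof (cases "(c,d) \<in> E")
      case True
      then show ?thesis using spannedI cd(2,3) by blast
    next
      case False
      then have "c \<in> E `` {a} \<union> E `` {b}" "d \<in> E `` {a} \<union> E `` {b}"
        using cd(1) unfolding merge_classes_def by blast+
      from merged_pair_lca[OF this cd(2)] show ?thesis
      proof
        assume "\<exists>e f. (e,f) \<in> E \<and> e \<noteq> f \<and> e \<in> E `` {a} \<union> E `` {b} \<and> lca T {c,d} = lca T {e,f}"
        then obtain e f where "(e,f) \<in> E" "e \<noteq> f" "lca T {c,d} = lca T {e,f}" by blast
        then show ?thesis using spannedI[of e f E] cd(3) by simp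
      qed (simp add: cd(3))
    qed
  qed
  have "(a,b) \<in> merge_classes E a b"
    unfolding merge_classes_def using equiv_class_self[OF E(1)] ab_in_I by blast
  moreover have "spanned E \<subseteq> spanned (merge_classes E a b)"
    by (rule spanned_mono) (auto simp: merge_classes_def)
  ultimately show "insert (lca T {a,b}) (spanned E) \<subseteq> spanned (merge_classes E a b)"
    using spannedI[OF _ ab(2)] by blast
qed

text \<open>A pair of E1 with ancestor lca T {a, b} is split crosswise against a, b; the crosswise
pairs lie strictly lower, hence in E.\<close>
lemma merge_pair_in_between:
  assumes E1: "equiv I E1" and "E \<subseteq> E1" "E1 \<subseteq> E'" "lca T {a,b} \<in> spanned E1"
  shows "(a,b) \<in> E1"
proof -
  have "sym E1" "trans E1" using E1 by (blast elim: equivE)+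
  obtain p q where pq: "(p,q) \<in> E1" "p \<noteq> q" "lca T {a,b} = lca T {p,q}"
    using assms(4) by (rule spannedE)
  have pqI: "p \<in> I" "q \<in> I" using pq(1) equiv_type[OF E1] by blast+
  have "(p,q) \<in> E'" using pq(1) assms(3) by blast
  then have "(p,a) \<in> E'" using lca_compatibleD[OF E'(2) \<open>(p,q) \<in> E'\<close> ab(1) pq(2) ab(2)] pq(3) by simp
  then have in_E': "(p,a) \<in> E'" "(q,b) \<in> E'" "(p,b) \<in> E'" "(q,a) \<in> E'"
    using \<open>(p,q) \<in> E'\<close> ab(1) symD[OF sym_trans(3)] transD[OF sym_trans(4)] by blast+
  have "(lca T {p,a} \<subset> lca T {a,b} \<and> lca T {q,b} \<subset> lca T {a,b}) \<or>
        (lca T {p,b} \<subset> lca T {a,b} \<and> lca T {q,a} \<subset> lca T {a,b})"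
    using lca_four_points[OF pqI ab_in_I pq(2) ab(2)] pq(3) by simp
  then have "((p,a) \<in> E \<and> (q,b) \<in> E) \<or> ((p,b) \<in> E \<and> (q,a) \<in> E)"
    using lower_pair_in_E in_E' by blast
  then show ?thesis
    using pq(1) assms(2) symD[OF \<open>sym E1\<close>] transD[OF \<open>trans E1\<close>] by blast
qed

lemma merge_classes_admissible: "equiv I (merge_classes E a b)" "lca_compatible (merge_classes E a b)"
  using merge_classes_equiv[OF E(1) ab_in_I] merge_classes_lca_compatible by blast+

lemma merge_forest_below: "forest_of (merge_classes E a b) \<in> below_tree"
  using forest_of_below_tree merge_classes_admissible by blast

lemma same_tree_merge_forest: "same_tree (forest_of (merge_classes E a b)) = merge_classes E a b"
  using same_tree_forest_of merge_classes_admissible(1) by blast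

lemma merge_classes_finer: "merge_classes E a b \<subseteq> E'"
  using merge_classes_least[OF E'(1) finer ab(1)] .

lemma merge_forest_covers:
  assumes x: "x \<in> below_tree" "same_tree x = E"
  shows "covers below_tree (forest_le I) x (forest_of (merge_classes E a b))"
proof -
  let ?z = "forest_of (merge_classes E a b)"
  note z = merge_forest_below and same_tree_z = same_tree_merge_forest
  have "(a,b) \<in> merge_classes E a b"
    unfolding merge_classes_def using equiv_class_self[OF E(1)] ab_in_I by blast
  then have "x \<noteq> ?z" using x(2) ab_not_in_E same_tree_z by metis
  moreover have "E \<subseteq> merge_classes E a b" unfolding merge_classes_def by blast
  then have "forest_le I x ?z" using forest_le_iff_same_tree[OF x(1) z] x(2) same_tree_z by simp
  moreover have "w = ?z"
    if w: "w \<in> below_tree" "forest_le I x w" "forest_le I w ?z" "w \<noteq> x" for w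
  proof -
    have "E \<subseteq> same_tree w" "same_tree w \<subseteq> merge_classes E a b"
      using forest_le_iff_same_tree[OF x(1) w(1)] forest_le_iff_same_tree[OF w(1) z] w(2,3) x(2) same_tree_z
      by simp_all
    moreover have "same_tree w \<noteq> E" using below_tree_eqI[OF w(1) x(1)] w(4) x(2) by blast
    ultimately have "same_tree w = merge_classes E a b"
      using merge_classes_atom[OF E(1) same_tree_admissible(1)[OF w(1)]] by blast
    then show ?thesis using below_tree_eqI[OF w(1) z] same_tree_z by simp
  qed
  ultimately show ?thesis
    unfolding covers_def using x(1) z by blast
qed

lemma merge_forest_unique:
  assumes x: "x \<in> below_tree" "same_tree x = E" and y: "y \<in> below_tree" "same_tree y = E'"
    and z: "covers below_tree (forest_le I) x z" "forest_le I z y" "lca T {a,b} \<in> spanned (same_tree z)"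
  shows "z = forest_of (merge_classes E a b)"
proof -
  have z_below: "z \<in> below_tree" and "forest_le I x z" using z(1) unfolding covers_def by blast+
  then have sub: "E \<subseteq> same_tree z" "same_tree z \<subseteq> E'"
    using forest_le_iff_same_tree[OF x(1) z_below] forest_le_iff_same_tree[OF z_below y(1)] x(2) y(2) z(2)
    by simp_all
  note adm = same_tree_admissible(1)[OF z_below]
  have "merge_classes E a b \<subseteq> same_tree z"
    using merge_classes_least[OF adm sub(1) merge_pair_in_between[OF adm sub z(3)]] .
  then have "forest_le I (forest_of (merge_classes E a b)) z"
    using forest_le_iff_same_tree[OF merge_forest_below z_below] same_tree_merge_forest by simp
  moreover have "forest_of (merge_classes E a b) \<noteq> x" "forest_le I x (forest_of (merge_classes E a b))"
    using merge_forest_covers[OF x] unfolding covers_def by blast+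
  ultimately show ?thesis
    using z(1) merge_forest_below unfolding covers_def by blast
qed

end

end

section \<open>EL-labelings from set-valued ranks\<close>

lemma sat_chain_singleton: "sat_chain P le x y [z] \<longleftrightarrow> z = x \<and> x = y \<and> x \<in> P"
  unfolding sat_chain_def by auto

lemma sat_chain_Cons_Cons:
  "sat_chain P le x y (u # v # cs) \<longleftrightarrow> u = x \<and> covers P le u v \<and> sat_chain P le v y (v # cs)"
  (is "?lhs \<longleftrightarrow> ?rhs")
proof
  assume ?lhs
  then have "covers P le ((u # v # cs) ! i) ((u # v # cs) ! Suc i)" if "Suc i < length (u # v # cs)" for i
    using that unfolding sat_chain_def by blast
  from this[of 0] this[of "Suc i" for i] \<open>?lhs\<close> show ?rhs
    unfolding sat_chain_def by auto
next
  assume ?rhs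
  then have "covers P le ((u # v # cs) ! i) ((u # v # cs) ! Suc i)" if "Suc i < length (u # v # cs)" for i
    using that unfolding sat_chain_def by (cases i) auto
  with \<open>?rhs\<close> show ?lhs unfolding sat_chain_def covers_def by auto
qed

lemma chain_label_singleton: "chain_label lab [x] = []"
  unfolding chain_label_def by simp

lemma chain_label_Cons_Cons: "chain_label lab (x # z # cs) = lab x z # chain_label lab (z # cs)"
proof -
  have "[0..<length (x # z # cs) - 1] = 0 # map Suc [0..<length (z # cs) - 1]"
    by (simp add: upt_conv_Cons map_Suc_upt del: upt_Suc)
  then show ?thesis unfolding chain_label_def by simp
qed

lemma sorted_lexord_less:
  fixes xs ys :: "'a::linorder list"
  assumes "sorted xs" "distinct xs" "distinct ys" "set xs = set ys" "\<not> sorted ys"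
  shows "(xs, ys) \<in> lexord {(a,b). a < b}"
  using assms
proof (induction xs arbitrary: ys)
  case Nil
  then show ?case by simp
next
  case (Cons x xs)
  obtain y ys' where ys: "ys = y # ys'" using Cons.prems(4) by (cases ys) auto
  show ?case
  proof (cases "y = x")
    case True
    then have "set xs = set ys'" "\<not> sorted ys'"
      using Cons.prems ys by auto
    then show ?thesis using Cons.IH Cons.prems(1,2,3) ys True by simp
  next
    case False
    then have "x < y" using Cons.prems(1,4) ys by (metis list.set_intros(1) order_le_neq_trans set_ConsD sorted_simps(2))
    then show ?thesis using ys by simp
  qed
qed

text \<open>Each x carries a finite set S x of letters. Labelling a cover by the code of the letter
it adds, the increasing chain from x to y adds the letters of S y - S x in increasing order of
their codes.\<close>
locale EL_by_letters =
  fixes P :: "'x set" and le :: "'x \<Rightarrow> 'x \<Rightarrow> bool" and S :: "'x \<Rightarrow> 'v set" and code :: "'v \<Rightarrow> nat"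
  assumes finite_P: "finite P"
    and le_refl: "\<And>x. x \<in> P \<Longrightarrow> le x x"
    and le_trans: "\<And>x y z. x \<in> P \<Longrightarrow> y \<in> P \<Longrightarrow> z \<in> P \<Longrightarrow> le x y \<Longrightarrow> le y z \<Longrightarrow> le x z"
    and finite_S: "\<And>x. x \<in> P \<Longrightarrow> finite (S x)"
    and S_mono: "\<And>x y. x \<in> P \<Longrightarrow> y \<in> P \<Longrightarrow> le x y \<Longrightarrow> S x \<subseteq> S y"
    and S_inj: "\<And>x y. x \<in> P \<Longrightarrow> y \<in> P \<Longrightarrow> le x y \<Longrightarrow> S x = S y \<Longrightarrow> x = y"
    and code_inj: "inj_on code (\<Union>x\<in>P. S x)"
    and add_least: "\<And>x y v. x \<in> P \<Longrightarrow> y \<in> P \<Longrightarrow> le x y \<Longrightarrow> v \<in> S y - S x \<Longrightarrow>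
        (\<forall>u\<in>S y - S x. code v \<le> code u) \<Longrightarrow>
        \<exists>z\<in>P. covers P le x z \<and> le z y \<and> S z = insert v (S x) \<and>
          (\<forall>z'\<in>P. covers P le x z' \<and> le z' y \<and> v \<in> S z' \<longrightarrow> z' = z)"
begin

definition label :: "'x \<Rightarrow> 'x \<Rightarrow> nat" where
  "label x y = code (the_elem (S y - S x))"

lemma least_code_exists:
  assumes "A \<noteq> {}"
  obtains v where "v \<in> A" "\<forall>u\<in>A. code v \<le> code u"
proof -
  obtain k where "k \<in> A" using assms by blast
  then show ?thesis using that ex_has_least_nat[of "\<lambda>v. v \<in> A" k code] by blast
qed

lemma cover_adds_one:
  assumes c: "covers P le x y"
  obtains v where "v \<notin> S x" "S y = insert v (S x)"
proof -
  have xy: "x \<in> P" "y \<in> P" "le x y" "x \<noteq> y" using c unfolding covers_def by blast+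
  then have "S y - S x \<noteq> {}" using S_mono S_inj by blast
  then obtain v where v: "v \<in> S y - S x" "\<forall>u\<in>S y - S x. code v \<le> code u"
    by (rule least_code_exists)
  then obtain z where z: "z \<in> P" "covers P le x z" "le z y" "S z = insert v (S x)"
    using add_least[OF xy(1,2,3)] by blast
  then have "z = y" using c unfolding covers_def by blast
  then show ?thesis using that z(4) v(1) by blast
qed

lemma label_cover: "v \<notin> S x \<Longrightarrow> S y = insert v (S x) \<Longrightarrow> label x y = code v"
  unfolding label_def by (simp add: insert_Diff_if)

lemma chain_labels:
  assumes "sat_chain P le x y cs"
  shows "x \<in> P \<and> y \<in> P \<and> le x y \<and> S x \<subseteq> S y \<and> set (chain_label label cs) = code ` (S y - S x) \<and>
    distinct (chain_label label cs)"
  using assms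
proof (induction cs arbitrary: x)
  case Nil
  then show ?case unfolding sat_chain_def by simp
next
  case (Cons u cs)
  show ?case
  proof (cases cs)
    case Nil
    then have "sat_chain P le x y [u]" using Cons.prems by simp
    then have "u = x \<and> x = y \<and> x \<in> P" by (rule sat_chain_singleton[THEN iffD1])
    then show ?thesis using le_refl Nil by (auto simp: chain_label_singleton)
  next
    case (Cons z cs')
    with Cons.prems have c: "covers P le x z" and s: "sat_chain P le z y (z # cs')" and "u = x"
      by (auto simp: sat_chain_Cons_Cons)
    then have IH: "y \<in> P" "le z y" "S z \<subseteq> S y" "set (chain_label label (z # cs')) = code ` (S y - S z)"
      "distinct (chain_label label (z # cs'))"
      using Cons.IH[of z] Cons by auto
    obtain v where v: "v \<notin> S x" "S z = insert v (S x)" using cover_adds_one[OF c] .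
    have xz: "x \<in> P" "z \<in> P" "le x z" using c unfolding covers_def by blast+
    have "code v \<notin> code ` (S y - S z)"
    proof
      assume "code v \<in> code ` (S y - S z)"
      then obtain u where "code v = code u" "u \<in> S y - S z" by (rule imageE)
      moreover have "u \<in> (\<Union>x\<in>P. S x)" "v \<in> (\<Union>x\<in>P. S x)"
        using IH(1) xz(2) v(2) calculation(2) by blast+
      ultimately show False using inj_onD[OF code_inj] v(2) by blast
    qed
    moreover have "S y - S x = insert v (S y - S z)" using v IH(3) by blast
    moreover have "chain_label label (u # cs) = code v # chain_label label (z # cs')"
      by (simp add: Cons \<open>u = x\<close> chain_label_Cons_Cons label_cover[OF v])
    ultimately show ?thesis
      using IH v xz(1) le_trans[OF xz(1,2) IH(1) xz(3) IH(2)] by simp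
  qed
qed

lemma increasing_chain_exists:
  assumes "x \<in> P" "y \<in> P" "le x y"
  shows "\<exists>cs. sat_chain P le x y cs \<and> sorted (chain_label label cs)"
  using assms
proof (induction "card (S y - S x)" arbitrary: x rule: less_induct)
  case less
  show ?case
  proof (cases "S x = S y")
    case True
    then have "sat_chain P le x y [x]" using S_inj less.prems by (simp add: sat_chain_singleton)
    then show ?thesis by (auto simp: chain_label_singleton)
  next
    case False
    then have "S y - S x \<noteq> {}" using S_mono less.prems by blast
    then obtain v where v: "v \<in> S y - S x" "\<forall>u\<in>S y - S x. code v \<le> code u"
      by (rule least_code_exists)
    then obtain z where z: "z \<in> P" "covers P le x z" "le z y" "S z = insert v (S x)"
      using add_least[OF less.prems] by blast
    have "S y - S z = (S y - S x) - {v}" using z(4) by blast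
    moreover have "finite (S y - S x)" using finite_S[OF less.prems(2)] by blast
    ultimately have "card (S y - S z) < card (S y - S x)"
      using card_Diff1_less v(1) by metis
    then obtain cs where cs: "sat_chain P le z y cs" "sorted (chain_label label cs)"
      using less.hyps z(1,3) less.prems(2) by blast
    then obtain cs' where cs': "cs = z # cs'" unfolding sat_chain_def by (cases cs) auto
    have "set (chain_label label cs) = code ` (S y - S z)" using chain_labels[OF cs(1)] by blast
    then have "\<forall>l\<in>set (chain_label label (z # cs')). code v \<le> l" using v(2) cs' z(4) by auto
    moreover have "label x z = code v" using label_cover v(1) z(4) by blast
    ultimately have "sorted (chain_label label (x # z # cs'))"
      using cs(2) cs' by (simp add: chain_label_Cons_Cons)
    moreover have "sat_chain P le x y (x # z # cs')" using z(2) cs(1) cs' by (simp add: sat_chain_Cons_Cons)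
    ultimately show ?thesis by blast
  qed
qed

lemma increasing_chain_first_step:
  assumes s: "sat_chain P le x y (x # z # cs)" and sorted: "sorted (chain_label label (x # z # cs))"
  obtains v where "v \<in> S y - S x" "\<forall>u\<in>S y - S x. code v \<le> code u" "S z = insert v (S x)"
    "covers P le x z" "le z y"
proof -
  have c: "covers P le x z" and s': "sat_chain P le z y (z # cs)" using s by (auto simp: sat_chain_Cons_Cons)
  obtain v where v: "v \<notin> S x" "S z = insert v (S x)" using cover_adds_one[OF c] .
  note rest = chain_labels[OF s']
  have "\<forall>l\<in>set (chain_label label (z # cs)). code v \<le> l"
    using sorted label_cover[OF v] by (simp add: chain_label_Cons_Cons)
  then have "\<forall>u\<in>S y - S z. code v \<le> code u" using rest by auto
  moreover have "S y - S x = insert v (S y - S z)" using v rest by blast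
  ultimately show ?thesis using that v c rest by auto
qed

lemma sat_chain_to_self:
  assumes "sat_chain P le x x (x # z # cs)"
  shows False
proof -
  have c: "covers P le x z" and s: "sat_chain P le z x (z # cs)"
    using assms by (auto simp: sat_chain_Cons_Cons)
  obtain v where "v \<notin> S x" "S z = insert v (S x)" using cover_adds_one[OF c] .
  then show False using chain_labels[OF s] by auto
qed

lemma increasing_chains_first_step:
  assumes s: "sat_chain P le x y (x # z # cs)" "sat_chain P le x y (x # z' # cs')"
    and sorted: "sorted (chain_label label (x # z # cs))" "sorted (chain_label label (x # z' # cs'))"
  shows "z = z'"
proof -
  obtain v where v: "v \<in> S y - S x" "\<forall>u\<in>S y - S x. code v \<le> code u" "S z = insert v (S x)"
    "covers P le x z" "le z y"
    using increasing_chain_first_step[OF s(1) sorted(1)] .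
  obtain v' where v': "v' \<in> S y - S x" "\<forall>u\<in>S y - S x. code v' \<le> code u" "S z' = insert v' (S x)"
    "covers P le x z'" "le z' y"
    using increasing_chain_first_step[OF s(2) sorted(2)] .
  have xy: "x \<in> P" "y \<in> P" "le x y" using chain_labels[OF s(1)] by blast+
  have "code v = code v'" using v(1,2) v'(1,2) by force
  then have "v = v'" using inj_onD[OF code_inj] v(1) v'(1) xy(2) by blast
  obtain w where "\<forall>w'\<in>P. covers P le x w' \<and> le w' y \<and> v \<in> S w' \<longrightarrow> w' = w"
    using add_least[OF xy v(1,2)] by blast
  then show "z = z'" using v(3-5) v'(3-5) \<open>v = v'\<close> unfolding covers_def by blast
qed

lemma increasing_chain_unique:
  assumes "sat_chain P le x y cs" "sorted (chain_label label cs)"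
    "sat_chain P le x y cs'" "sorted (chain_label label cs')"
  shows "cs = cs'"
  using assms
proof (induction cs arbitrary: x cs')
  case Nil
  then show ?case unfolding sat_chain_def by simp
next
  case (Cons u cs)
  obtain u' ds where cs': "cs' = u' # ds" using Cons.prems(3) unfolding sat_chain_def by (cases cs') auto
  have u: "u = x" "u' = x" using Cons.prems(1,3) cs' unfolding sat_chain_def by auto
  consider "cs = []" "ds = []" | z zs where "cs = z # zs" "ds = []" | z' zs' where "cs = []" "ds = z' # zs'"
    | z zs z' zs' where "cs = z # zs" "ds = z' # zs'"
    by (cases cs; cases ds) auto
  then show ?case
  proof cases
    case 1
    then show ?thesis using cs' u by simp
  next
    case 2
    then show ?thesis
      using Cons.prems(1,3) cs' u sat_chain_to_self by (auto simp: sat_chain_singleton)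
  next
    case 3
    then show ?thesis
      using Cons.prems(1,3) cs' u sat_chain_to_self by (auto simp: sat_chain_singleton)
  next
    case (4 z zs z' zs')
    then have "z = z'"
      using increasing_chains_first_step Cons.prems cs' u by simp
    moreover have "z # zs = z # zs'"
      using Cons.IH[of z "z # zs'"] Cons.prems cs' u 4 calculation
      by (simp add: sat_chain_Cons_Cons chain_label_Cons_Cons)
    ultimately show ?thesis using 4 cs' u by simp
  qed
qed

lemma EL_labeling: "EL_labeling P le label"
  unfolding EL_labeling_def
proof (intro ballI impI conjI allI)
  fix x y assume xy: "x \<in> P" "y \<in> P" "le x y"
  show "\<exists>!cs. sat_chain P le x y cs \<and> sorted (chain_label label cs)"
    using increasing_chain_exists[OF xy] increasing_chain_unique by blast
  fix cs cs'
  assume "sat_chain P le x y cs \<and> sorted (chain_label label cs) \<and> sat_chain P le x y cs' \<and> cs' \<noteq> cs"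
  then have "\<not> sorted (chain_label label cs')" "sat_chain P le x y cs" "sorted (chain_label label cs)"
    "sat_chain P le x y cs'"
    using increasing_chain_unique by blast+
  then show "(chain_label label cs, chain_label label cs') \<in> lexord {(a, b). a < b}"
    using sorted_lexord_less chain_labels by metis
qed

lemma graded: "graded P le"
  unfolding graded_def
proof (intro conjI finite_P exI[of _ "\<lambda>x. card (S x)"] ballI impI)
  fix x y assume "x \<in> P" "covers P le x y"
  then obtain v where "v \<notin> S x" "S y = insert v (S x)" using cover_adds_one by blast
  then show "card (S y) = card (S x) + 1" using finite_S[OF \<open>x \<in> P\<close>] by simp
qed

theorem EL_shellable: "EL_shellable P le"
  unfolding EL_shellable_def using EL_labeling graded by blast

end

section \<open>EL-shellability of the interval below a tree\<close>

text \<open>Sort by cardinality first, then by an arbitrary enumeration of T.\<close>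
lemma strict_mono_code_exists:
  assumes "finite T" "\<forall>A\<in>T. finite A"
  shows "\<exists>code :: 'a set \<Rightarrow> nat. inj_on code T \<and> (\<forall>A\<in>T. \<forall>B\<in>T. A \<subset> B \<longrightarrow> code A < code B)"
proof -
  obtain h where h: "bij_betw h T {0..<card T}" using ex_bij_betw_finite_nat[OF assms(1)] by blast
  define code where "code A = card A * card T + h A" for A
  have h_less: "h A < card T" if "A \<in> T" for A using h that unfolding bij_betw_def by auto
  have "inj_on code T"
  proof (rule inj_onI)
    fix A B assume "A \<in> T" "B \<in> T" "code A = code B"
    have "code A mod card T = h A" "code B mod card T = h B"
      unfolding code_def using h_less \<open>A \<in> T\<close> \<open>B \<in> T\<close> by simp_all
    then have "h A = h B" using \<open>code A = code B\<close> by simp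
    then show "A = B" using h \<open>A \<in> T\<close> \<open>B \<in> T\<close> unfolding bij_betw_def inj_on_def by blast
  qed
  moreover have "code A < code B" if "A \<in> T" "B \<in> T" "A \<subset> B" for A B
  proof -
    have "card A + 1 \<le> card B" using psubset_card_mono[OF bspec[OF assms(2) that(2)] that(3)] by simp
    then have "card A * card T + card T \<le> card B * card T"
      using mult_right_mono[of "card A + 1" "card B" "card T"] by simp
    then show ?thesis unfolding code_def using h_less[OF that(1)] by simp
  qed
  ultimately show ?thesis by blast
qed


lemma least_code_below:
  fixes code :: "'a set \<Rightarrow> nat"
  assumes "\<forall>A\<in>T. \<forall>B\<in>T. A \<subset> B \<longrightarrow> code A < code B" "Y \<subseteq> T"
    and "v \<in> Y - X" "\<forall>u\<in>Y - X. code v \<le> code u"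
  shows "\<forall>w\<in>Y. w \<subset> v \<longrightarrow> w \<in> X"
proof (intro ballI impI)
  fix w assume "w \<in> Y" "w \<subset> v"
  moreover have "w \<in> T" "v \<in> T" using assms(2,3) \<open>w \<in> Y\<close> by blast+
  ultimately have "code w < code v" using assms(1) by blast
  show "w \<in> X"
  proof (rule ccontr)
    assume "w \<notin> X"
    then have "code v \<le> code w" using assms(4) \<open>w \<in> Y\<close> by blast
    then show False using \<open>code w < code v\<close> by simp
  qed
qed

context finite_tree
begin

text \<open>The letters of a forest below T are the vertices of T spanned by its trees; the cover
adding a letter v = lca T {a, b} that is least for a linear extension of the tree order
merges the trees of a and b.\<close>
lemma below_tree_add_least:
  fixes code :: "'a set \<Rightarrow> nat"
  assumes code: "\<forall>A\<in>T. \<forall>B\<in>T. A \<subset> B \<longrightarrow> code A < code B"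
    and x: "x \<in> below_tree" and y: "y \<in> below_tree" "forest_le I x y"
    and v: "v \<in> spanned (same_tree y) - spanned (same_tree x)"
    and least: "\<forall>u\<in>spanned (same_tree y) - spanned (same_tree x). code v \<le> code u"
  shows "\<exists>z\<in>below_tree. covers below_tree (forest_le I) x z \<and> forest_le I z y \<and>
           spanned (same_tree z) = insert v (spanned (same_tree x)) \<and>
           (\<forall>z'\<in>below_tree. covers below_tree (forest_le I) x z' \<and> forest_le I z' y \<and>
              v \<in> spanned (same_tree z') \<longrightarrow> z' = z)"
proof -
  let ?E = "same_tree x" and ?E' = "same_tree y"
  obtain a b where ab: "(a,b) \<in> ?E'" "a \<noteq> b" "v = lca T {a,b}"
    using v by (blast elim: spannedE)
  have lower: "\<forall>w\<in>spanned ?E'. w \<subset> lca T {a,b} \<longrightarrow> w \<in> spanned ?E"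
    using least_code_below[OF code spanned_subset_tree[OF same_tree_admissible(1)[OF y(1)]] v least]
    by (simp add: ab(3))
  note merge = same_tree_admissible[OF x] same_tree_admissible[OF y(1)]
    forest_le_iff_same_tree[OF x y(1), THEN iffD1, OF y(2)] ab(1,2)
  have new: "lca T {a,b} \<notin> spanned ?E" using v ab(3) by blast
  let ?z = "forest_of (merge_classes ?E a b)"
  show ?thesis
  proof (intro bexI conjI ballI impI)
    show "?z \<in> below_tree" by (rule merge_forest_below[OF merge new lower])
    show "covers below_tree (forest_le I) x ?z"
      by (rule merge_forest_covers[OF merge new lower x refl])
    show "forest_le I ?z y"
      using forest_le_iff_same_tree[OF merge_forest_below[OF merge new lower] y(1)]
        same_tree_merge_forest[OF merge new lower] merge_classes_finer[OF merge new lower]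
      by simp
    show "spanned (same_tree ?z) = insert v (spanned ?E)"
      using spanned_merge_classes[OF merge new lower] same_tree_merge_forest[OF merge new lower] ab(3)
      by simp
    fix z' assume "z' \<in> below_tree"
      and "covers below_tree (forest_le I) x z' \<and> forest_le I z' y \<and> v \<in> spanned (same_tree z')"
    then show "z' = ?z"
      using merge_forest_unique[OF merge new lower x refl y(1) refl] ab(3) by blast
  qed
qed

lemma below_tree_EL_by_letters:
  fixes code :: "'a set \<Rightarrow> nat"
  assumes "inj_on code T" "\<forall>A\<in>T. \<forall>B\<in>T. A \<subset> B \<longrightarrow> code A < code B"
  shows "EL_by_letters below_tree (forest_le I) (\<lambda>H. spanned (same_tree H)) code"
proof
  have le: "forest_le I H H' \<longleftrightarrow> same_tree H \<subseteq> same_tree H'" if "H \<in> below_tree" "H' \<in> below_tree" for H H'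
    using forest_le_iff_same_tree[OF that] .
  have letters: "spanned (same_tree H) \<subseteq> T" if "H \<in> below_tree" for H
    using spanned_subset_tree same_tree_admissible(1)[OF that] .
  show "finite below_tree" by (rule finite_below_tree)
  show "forest_le I H H" if "H \<in> below_tree" for H using le[OF that that] by simp
  show "forest_le I H H''" if "H \<in> below_tree" "H' \<in> below_tree" "H'' \<in> below_tree"
    "forest_le I H H'" "forest_le I H' H''" for H H' H''
    using le[OF that(1,2)] le[OF that(2,3)] le[OF that(1,3)] that(4,5) by simp
  show "finite (spanned (same_tree H))" if "H \<in> below_tree" for H
    using finite_subset[OF letters[OF that] finite_clusters] .
  show "spanned (same_tree H) \<subseteq> spanned (same_tree H')"
    if "H \<in> below_tree" "H' \<in> below_tree" "forest_le I H H'" for H H'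
    using spanned_mono le[OF that(1,2)] that(3) by simp
  show "H = H'" if "H \<in> below_tree" "H' \<in> below_tree" "forest_le I H H'"
    "spanned (same_tree H) = spanned (same_tree H')" for H H'
  proof (rule below_tree_eqI[OF that(1,2)])
    show "same_tree H = same_tree H'"
      using eq_if_spanned_eq[OF same_tree_admissible(1)[OF that(1)] same_tree_admissible[OF that(2)]]
        le[OF that(1,2)] that(3,4) by simp
  qed
  have "(\<Union>H\<in>below_tree. spanned (same_tree H)) \<subseteq> T" using letters by blast
  then show "inj_on code (\<Union>H\<in>below_tree. spanned (same_tree H))"
    by (rule inj_on_subset[OF assms(1)])
qed (rule below_tree_add_least[OF assms(2)])

theorem below_tree_EL_shellable: "EL_shellable below_tree (forest_le I)"
proof -
  have "\<forall>D\<in>T. finite D" using finite_cluster by blast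
  from strict_mono_code_exists[OF finite_clusters this]
  obtain code :: "'a set \<Rightarrow> nat" where "inj_on code T" "\<forall>A\<in>T. \<forall>B\<in>T. A \<subset> B \<longrightarrow> code A < code B"
    by blast
  then show ?thesis by (rule EL_by_letters.EL_shellable[OF below_tree_EL_by_letters])
qed

end

theorem theorem4p4:
  fixes I :: "'a set" and T :: "'a set set"
  assumes "finite I" and "is_tree I T"
  shows "EL_shellable (forest_interval I (zero_forest I) T) (forest_le I)"
proof -
  interpret finite_tree I T using assms by unfold_locales
  show ?thesis by (rule below_tree_EL_shellable)
qed

end
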